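(* Let $H_1,H_2$ be Hilbert spaces, let $C\in\mathcal{B}(H_2,H_1)$ be a contraction, and let $T=\begin{bmatrix}I_{H_1} & C\\ C^* & I_{H_2}\end{bmatrix}$ on $H_1\oplus H_2$. Then $T\in\overline{\mathcal{AN}(H_1\oplus H_2)}$ if and only if $C$ is compact.
   Context: Throughout, Hilbert spaces are complex, separable and infinite dimensional; $\mathcal{B}(H_1,H_2)$ denotes bounded linear operators with the operator norm. An operator $S\in\mathcal{B}(H_1,H_2)$ is norm attaining if there is a unit vector $x\in H_1$ with $\|Sx\|=\|S\|$; $S$ is absolutely norm attaining, written $S\in\mathcal{AN}(H_1,H_2)$ (and $\mathcal{AN}(H)=\mathcal{AN}(H,H)$), if for every nonzero closed subspace $M\subseteq H_1$ the restriction $S|_M$ is norm attaining. $\overline{\mathcal{AN}(H)}$ denotes the operator-norm closure of $\mathcal{AN}(H)$ in $\mathcal{B}(H)$. *)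

theory Defs
  imports "HOL-Analysis.Analysis"
begin

class complex_vector = real_vector +
  fixes scaleC :: "complex \<Rightarrow> 'a \<Rightarrow> 'a" (infixr \<open>*\<^sub>C\<close> 75)
  assumes scaleC_add_right: "a *\<^sub>C (x + y) = a *\<^sub>C x + a *\<^sub>C y"
    and scaleC_add_left: "(a + b) *\<^sub>C x = a *\<^sub>C x + b *\<^sub>C x"
    and scaleC_scaleC: "a *\<^sub>C (b *\<^sub>C x) = (a * b) *\<^sub>C x"
    and scaleC_one: "1 *\<^sub>C x = x"
    and scaleR_scaleC: "r *\<^sub>R x = complex_of_real r *\<^sub>C x"

text \<open>Complex inner product space; the inner product is linear in the second and
  conjugate-linear in the first argument; the norm is the one induced by it.\<close>
class complex_inner = complex_vector + real_normed_vector +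
  fixes cinner :: "'a \<Rightarrow> 'a \<Rightarrow> complex"
  assumes cinner_conj: "cinner x y = cnj (cinner y x)"
    and cinner_add_right: "cinner x (y + z) = cinner x y + cinner x z"
    and cinner_scaleC_right: "cinner x (a *\<^sub>C y) = a * cinner x y"
    and norm_eq_sqrt_cinner: "norm x = sqrt (Re (cinner x x))"

class chilbert_space = complex_inner + complete_space

text \<open>The Hilbert direct sum \<open>H1 \<oplus> H2\<close> is the product type; its norm (from Product_Vector) is
  \<open>norm (a,b) = sqrt (norm a ^ 2 + norm b ^ 2)\<close>; scalars act componentwise.\<close>
instantiation prod :: (complex_vector, complex_vector) complex_vector
begin
definition scaleC_prod_def: "c *\<^sub>C x = (c *\<^sub>C fst x, c *\<^sub>C snd x)"
instance
  by standard (auto simp: scaleC_prod_def prod_eq_iff scaleC_add_right scaleC_add_left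
      scaleC_scaleC scaleC_one scaleR_scaleC[symmetric])
end

definition cspan :: "'a::complex_vector set \<Rightarrow> 'a set" where
  "cspan S = {x. \<exists>F c. finite F \<and> F \<subseteq> S \<and> x = (\<Sum>v\<in>F. c v *\<^sub>C v)}"

definition separable_infdim :: "'a::complex_inner itself \<Rightarrow> bool" where
  "separable_infdim _ \<longleftrightarrow> separable_space (euclidean :: 'a topology)
      \<and> (\<forall>S::'a set. finite S \<longrightarrow> cspan S \<noteq> UNIV)"

definition clinear :: "('a::complex_vector \<Rightarrow> 'b::complex_vector) \<Rightarrow> bool" where
  "clinear f \<longleftrightarrow> (\<forall>x y. f (x + y) = f x + f y) \<and> (\<forall>c x. f (c *\<^sub>C x) = c *\<^sub>C f x)"

text \<open>\<open>\<B>(H1,H2)\<close>: complex-linear bounded operators (as bounded linear functions, whose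
  norm is the operator norm).\<close>
definition BOps :: "('a::{complex_vector,real_normed_vector} \<Rightarrow>\<^sub>L 'b::{complex_vector,real_normed_vector}) set" where
  "BOps = {S. clinear (blinfun_apply S)}"

definition csubspace :: "'a::complex_vector set \<Rightarrow> bool" where
  "csubspace M \<longleftrightarrow> 0 \<in> M \<and> (\<forall>x\<in>M. \<forall>y\<in>M. x + y \<in> M) \<and> (\<forall>c. \<forall>x\<in>M. c *\<^sub>C x \<in> M)"

definition norm_attaining_on :: "'a::real_normed_vector set \<Rightarrow> ('a \<Rightarrow>\<^sub>L 'b::real_normed_vector) \<Rightarrow> bool" where
  "norm_attaining_on M S \<longleftrightarrow>
     (\<exists>x\<in>M. norm x = 1 \<and> norm (S x) = Sup {norm (S y) | y. y \<in> M \<and> norm y = 1})"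

definition AN :: "('a::{complex_vector,real_normed_vector} \<Rightarrow>\<^sub>L 'b::{complex_vector,real_normed_vector}) set" where
  "AN = {S \<in> BOps. \<forall>M. csubspace M \<and> closed M \<and> M \<noteq> {0} \<longrightarrow> norm_attaining_on M S}"

definition compact_op :: "('a::real_normed_vector \<Rightarrow>\<^sub>L 'b::real_normed_vector) \<Rightarrow> bool" where
  "compact_op S \<longleftrightarrow> compact (closure (blinfun_apply S ` cball 0 1))"

definition block_op :: "('b::real_normed_vector \<Rightarrow>\<^sub>L 'a::real_normed_vector) \<Rightarrow> ('a \<Rightarrow>\<^sub>L 'b) \<Rightarrow> (('a \<times> 'b) \<Rightarrow>\<^sub>L ('a \<times> 'b))" where
  "block_op C C' = Blinfun (\<lambda>(x, y). (x + C y, C' x + y))"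

end

theory Submission
  imports Defs
begin

section \<open>Complex inner product spaces\<close>

global_interpretation complex_vector: vector_space "scaleC :: complex \<Rightarrow> 'a \<Rightarrow> 'a::complex_vector"
  by unfold_locales (simp_all add: scaleC_add_right scaleC_add_left scaleC_scaleC scaleC_one)

lemma csubspace_iff_subspace: "csubspace = complex_vector.subspace"
  by (simp add: fun_eq_iff csubspace_def complex_vector.subspace_def)

lemmas csubspace_0 = complex_vector.subspace_0[folded csubspace_iff_subspace]
lemmas csubspace_add = complex_vector.subspace_add[folded csubspace_iff_subspace]
lemmas csubspace_diff = complex_vector.subspace_diff[folded csubspace_iff_subspace]
lemmas csubspace_scaleC = complex_vector.subspace_scale[folded csubspace_iff_subspace]
lemmas csubspace_inter = complex_vector.subspace_inter[folded csubspace_iff_subspace]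

lemma csubspace_scaleR: "csubspace M \<Longrightarrow> x \<in> M \<Longrightarrow> r *\<^sub>R x \<in> M"
  by (simp add: csubspace_scaleC scaleR_scaleC)

lemma additive_cinner_right: "Modules.additive (cinner (a::'a::complex_inner))"
  by unfold_locales (rule cinner_add_right)

lemma cinner_add_left: "cinner (x + y) z = cinner x z + cinner (y::'a::complex_inner) z"
  by (metis cinner_conj cinner_add_right complex_cnj_add)

lemma additive_cinner_left: "Modules.additive (\<lambda>x. cinner x (a::'a::complex_inner))"
  by unfold_locales (rule cinner_add_left)

lemmas cinner_zero_right [simp] = Modules.additive.zero[OF additive_cinner_right]
lemmas cinner_diff_right = Modules.additive.diff[OF additive_cinner_right]
lemmas cinner_sum_right = Modules.additive.sum[OF additive_cinner_right]
lemmas cinner_zero_left [simp] = Modules.additive.zero[OF additive_cinner_left]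
lemmas cinner_diff_left = Modules.additive.diff[OF additive_cinner_left]
lemmas cinner_sum_left = Modules.additive.sum[OF additive_cinner_left]

lemma cinner_minus_right: "cinner x (- y) = - cinner x (y::'a::complex_inner)"
  by (rule Modules.additive.minus[OF additive_cinner_right])

lemma cinner_scaleC_left: "cinner (c *\<^sub>C x) y = cnj c * cinner (x::'a::complex_inner) y"
  by (metis cinner_conj cinner_scaleC_right complex_cnj_mult)

lemma cinner_scaleR_right: "cinner x (r *\<^sub>R y) = of_real r * cinner x (y::'a::complex_inner)"
  by (simp add: scaleR_scaleC cinner_scaleC_right)

lemma cinner_self: "cinner x x = of_real ((norm (x::'a::complex_inner))\<^sup>2)"
proof -
  have "Im (cinner x x) = 0"
    by (metis cinner_conj cnj.simps(2) neg_equal_zero)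
  moreover have "Re (cinner x x) = (norm x)\<^sup>2"
    using norm_eq_sqrt_cinner[of x] by (metis norm_ge_zero real_sqrt_ge_0_iff real_sqrt_pow2)
  ultimately show ?thesis by (simp add: complex_eq_iff)
qed

lemma cinner_self_eq_0 [simp]: "cinner x x = 0 \<longleftrightarrow> x = (0::'a::complex_inner)"
  by (simp add: cinner_self)

lemma cinner_eq_0_sym: "cinner x y = 0 \<longleftrightarrow> cinner y (x::'a::complex_inner) = 0"
  by (metis cinner_conj complex_cnj_zero_iff)

lemma norm_scaleC: "norm (c *\<^sub>C x) = cmod c * norm (x::'a::complex_inner)"
proof -
  have "complex_of_real ((norm (c *\<^sub>C x))\<^sup>2) = cinner (c *\<^sub>C x) (c *\<^sub>C x)"
    by (simp only: cinner_self)
  also have "\<dots> = cnj c * c * cinner x x"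
    by (simp add: cinner_scaleC_left cinner_scaleC_right)
  also have "cinner x x = of_real ((norm x)\<^sup>2)"
    by (rule cinner_self)
  also have "cnj c * c = of_real ((cmod c)\<^sup>2)"
    by (simp only: complex_norm_square mult.commute)
  finally have "(norm (c *\<^sub>C x))\<^sup>2 = (cmod c * norm x)\<^sup>2"
    by (simp only: of_real_mult[symmetric] of_real_eq_iff power_mult_distrib)
  then show ?thesis by simp
qed

lemma norm_add_sq:
  "(norm (x + y))\<^sup>2 = (norm x)\<^sup>2 + (norm y)\<^sup>2 + 2 * Re (cinner x (y::'a::complex_inner))"
proof -
  have "(norm (x + y))\<^sup>2 = Re (cinner x x) + Re (cinner y y) + Re (cinner x y) + Re (cinner y x)"
    using arg_cong[OF cinner_self[of "x + y"], of Re] by (simp add: cinner_add_left cinner_add_right)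
  also have "Re (cinner y x) = Re (cinner x y)"
    by (metis cinner_conj cnj.simps(1))
  finally show ?thesis by (simp add: cinner_self)
qed

lemma norm_diff_sq:
  "(norm (x - y))\<^sup>2 = (norm x)\<^sup>2 + (norm y)\<^sup>2 - 2 * Re (cinner x (y::'a::complex_inner))"
  using norm_add_sq[of x "- y"] by (simp add: cinner_minus_right)

lemma pythagoras:
  "cinner x y = 0 \<Longrightarrow> (norm (x + y))\<^sup>2 = (norm x)\<^sup>2 + (norm (y::'a::complex_inner))\<^sup>2"
  by (simp add: norm_add_sq)

lemma norm_sq_split_along:
  fixes x y :: "'a::complex_inner"
  assumes "x \<noteq> 0"
  shows "(norm y)\<^sup>2 = (cmod (cinner x y))\<^sup>2 / (norm x)\<^sup>2
      + (norm (y - (cinner x y / cinner x x) *\<^sub>C x))\<^sup>2"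
proof -
  define c where "c = cinner x y / cinner x x"
  have "c * cinner x x = cinner x y"
    using assms by (simp add: c_def)
  then have "cinner (c *\<^sub>C x) (y - c *\<^sub>C x) = 0"
    by (simp add: cinner_diff_right cinner_scaleC_left cinner_scaleC_right)
  then have "(norm y)\<^sup>2 = (norm (c *\<^sub>C x))\<^sup>2 + (norm (y - c *\<^sub>C x))\<^sup>2"
    using pythagoras[of "c *\<^sub>C x" "y - c *\<^sub>C x"] by simp
  moreover have "norm (c *\<^sub>C x) = cmod (cinner x y) / norm x"
    using assms by (simp add: c_def norm_scaleC cinner_self norm_divide norm_mult power2_eq_square)
  ultimately show ?thesis
    by (simp add: c_def power_divide)
qed

lemma Cauchy_Schwarz_cinner: "cmod (cinner x y) \<le> norm x * norm (y::'a::complex_inner)"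
proof (cases "x = 0")
  case False
  then have "(cmod (cinner x y))\<^sup>2 / (norm x)\<^sup>2 \<le> (norm y)\<^sup>2"
    using norm_sq_split_along[of x y] by simp
  then have "(cmod (cinner x y))\<^sup>2 \<le> (norm x * norm y)\<^sup>2"
    using False by (simp add: divide_le_eq power_mult_distrib mult.commute)
  then show ?thesis
    by (simp add: power2_le_iff_abs_le)
qed simp

lemma cinner_eq_0_if_norm_minimal:
  assumes "\<And>c. (norm y)\<^sup>2 \<le> (norm (y - c *\<^sub>C x))\<^sup>2"
  shows "cinner x (y::'a::complex_inner) = 0"
proof (cases "x = 0")
  case False
  then have "(cmod (cinner x y))\<^sup>2 / (norm x)\<^sup>2 \<le> 0"
    using norm_sq_split_along[of x y] assms[of "cinner x y / cinner x x"] by simp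
  with False show ?thesis
    by (simp add: divide_le_0_iff)
qed simp

lemma bounded_linear_cinner_right [bounded_linear]:
  "bounded_linear (cinner (a::'a::complex_inner))"
proof
  show "\<exists>K. \<forall>x. norm (cinner a x) \<le> norm x * K"
    using Cauchy_Schwarz_cinner[of a] by (metis mult.commute)
qed (simp_all add: cinner_add_right cinner_scaleR_right scaleR_conv_of_real)

lemma bounded_linear_scaleC_left: "bounded_linear (\<lambda>c::complex. c *\<^sub>C (x::'a::complex_inner))"
proof
  show "\<exists>K. \<forall>c. norm (c *\<^sub>C x) \<le> norm c * K"
    by (auto simp: norm_scaleC)
qed (simp_all add: scaleC_add_left scaleR_scaleC scaleR_conv_of_real)

lemma bounded_linear_scaleC_right [bounded_linear]:
  "bounded_linear (\<lambda>x::'a::complex_inner. c *\<^sub>C x)"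
proof
  show "\<exists>K. \<forall>x::'a. norm (c *\<^sub>C x) \<le> norm x * K"
    by (metis norm_scaleC mult.commute order_refl)
qed (simp_all add: scaleC_add_right scaleR_scaleC mult.commute)

lemma cinner_ext: "(\<And>z. cinner z x = cinner z y) \<Longrightarrow> x = (y::'a::complex_inner)"
  by (metis cinner_diff_right cinner_self_eq_0 right_minus_eq)

section \<open>Finite orthonormal sets and their projections\<close>

definition orthogonal_complement :: "'a::complex_inner set \<Rightarrow> 'a set" where
  "orthogonal_complement A = {x. \<forall>a\<in>A. cinner a x = 0}"

lemma csubspace_orthogonal_complement: "csubspace (orthogonal_complement A)"
  by (simp add: csubspace_def orthogonal_complement_def cinner_add_right cinner_scaleC_right)

lemma closed_orthogonal_complement: "closed (orthogonal_complement (A::'a::complex_inner set))"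
proof -
  have "orthogonal_complement A = (\<Inter>a\<in>A. {x. cinner a x = 0})"
    by (auto simp: orthogonal_complement_def)
  moreover have "closed {x::'a. cinner a x = 0}" for a
    by (intro closed_Collect_eq continuous_intros)
  ultimately show ?thesis
    by auto
qed

definition orthonormal :: "'a::complex_inner set \<Rightarrow> bool" where
  "orthonormal E \<longleftrightarrow> (\<forall>e\<in>E. norm e = 1) \<and> (\<forall>e\<in>E. \<forall>f\<in>E. e \<noteq> f \<longrightarrow> cinner e f = 0)"

definition proj :: "'a::complex_inner set \<Rightarrow> 'a \<Rightarrow> 'a" where
  "proj E x = (\<Sum>e\<in>E. cinner e x *\<^sub>C e)"

lemma additive_proj: "Modules.additive (proj E)"
  by unfold_locales (simp add: proj_def cinner_add_right scaleC_add_left sum.distrib)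

lemmas proj_add = Modules.additive.add[OF additive_proj]
lemmas proj_zero [simp] = Modules.additive.zero[OF additive_proj]
lemmas proj_diff = Modules.additive.diff[OF additive_proj]
lemmas proj_sum = Modules.additive.sum[OF additive_proj]

lemma proj_scaleC: "proj E (c *\<^sub>C x) = c *\<^sub>C proj E x"
  by (simp add: proj_def cinner_scaleC_right complex_vector.scale_sum_right)

lemma proj_scaleR: "proj E (r *\<^sub>R x) = r *\<^sub>R proj E x"
  by (simp add: scaleR_scaleC proj_scaleC)

lemma bounded_linear_proj: "bounded_linear (proj E)"
  unfolding proj_def
  by (intro bounded_linear_sum bounded_linear_compose[OF bounded_linear_scaleC_left]
      bounded_linear_cinner_right)

lemma cinner_proj_left: "cinner (proj E x) y = cinner x (proj E y)"
  by (simp add: proj_def cinner_sum_left cinner_sum_right cinner_scaleC_left cinner_scaleC_right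
      mult.commute) (metis cinner_conj)

lemma proj_eq_0: "x \<in> orthogonal_complement E \<Longrightarrow> proj E x = 0"
  by (simp add: proj_def orthogonal_complement_def)

lemma cinner_proj:
  assumes "finite E" "orthonormal E" "e \<in> E"
  shows "cinner e (proj E x) = cinner e x"
proof -
  have "cinner e (proj E x) = (\<Sum>f\<in>E. if f = e then cinner e x else 0)"
    unfolding proj_def cinner_sum_right using assms
    by (intro sum.cong) (auto simp: orthonormal_def cinner_scaleC_right cinner_self)
  then show ?thesis
    using assms by simp
qed

lemma diff_proj_orthogonal:
  "finite E \<Longrightarrow> orthonormal E \<Longrightarrow> x - proj E x \<in> orthogonal_complement E"
  by (simp add: orthogonal_complement_def cinner_diff_right cinner_proj)

lemma cinner_proj_diff_proj:
  assumes "finite E" "orthonormal E"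
  shows "cinner (proj E x) (y - proj E y) = 0"
  using proj_eq_0[OF diff_proj_orthogonal[OF assms]] by (simp add: cinner_proj_left)

lemma norm_sq_proj:
  assumes "finite E" "orthonormal E"
  shows "(norm x)\<^sup>2 = (norm (proj E x))\<^sup>2 + (norm (x - proj E x))\<^sup>2"
  using pythagoras[OF cinner_proj_diff_proj[OF assms, of x x]] by simp

lemma norm_diff_proj_le:
  assumes "finite E" "orthonormal E"
  shows "norm (x - proj E x) \<le> norm x"
proof (rule power2_le_imp_le)
  show "(norm (x - proj E x))\<^sup>2 \<le> (norm x)\<^sup>2"
    using norm_sq_proj[OF assms, of x] zero_le_power2[of "norm (proj E x)"] by linarith
qed simp

lemma proj_fixes_span:
  assumes "\<forall>a\<in>A. proj E a = a" and "x \<in> complex_vector.span A"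
  shows "proj E x = x"
proof -
  have "complex_vector.subspace {x. proj E x = x}"
    by (simp add: complex_vector.subspace_def proj_add proj_scaleC)
  then show ?thesis
    using assms complex_vector.span_minimal[of A "{x. proj E x = x}"] by blast
qed

lemma orthonormal_extend_to_fix:
  fixes a :: "'a::complex_inner"
  assumes E: "finite E" "orthonormal E"
  shows "\<exists>F. finite F \<and> orthonormal F \<and> proj F a = a \<and> (\<forall>b. proj E b = b \<longrightarrow> proj F b = b)"
proof (cases "proj E a = a")
  case True
  then show ?thesis
    using E by (intro exI[of _ E]) simp
next
  case False
  define r where "r = a - proj E a"
  define u where "u = complex_of_real (1 / norm r) *\<^sub>C r"
  have "r \<noteq> 0"
    using False by (metis r_def right_minus_eq)
  have "r \<in> orthogonal_complement E"
    unfolding r_def using E by (rule diff_proj_orthogonal)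
  then have u_orth: "u \<in> orthogonal_complement E"
    unfolding u_def by (rule csubspace_scaleC[OF csubspace_orthogonal_complement])
  have u_unit: "norm u = 1"
    using \<open>r \<noteq> 0\<close> by (simp add: u_def norm_scaleC norm_divide)
  then have "u \<notin> E"
    using u_orth by (auto simp: orthogonal_complement_def cinner_self)
  then have proj_insert: "proj (insert u E) x = cinner u x *\<^sub>C u + proj E x" for x
    using E(1) by (simp add: proj_def)
  have orthonormal_insert: "orthonormal (insert u E)"
    using E(2) u_unit u_orth unfolding orthonormal_def orthogonal_complement_def
    by (auto simp: cinner_eq_0_sym)
  have cinner_u: "cinner u x = cinner u (x - proj E x)" for x
    using proj_eq_0[OF u_orth] by (simp add: cinner_diff_right cinner_proj_left[symmetric])
  have "cinner u a = cinner u r"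
    using cinner_u[of a] by (simp add: r_def)
  also have "\<dots> = of_real (norm r)"
    using \<open>r \<noteq> 0\<close> by (simp add: u_def cinner_scaleC_left cinner_self power2_eq_square)
  finally have "cinner u a *\<^sub>C u = r"
    using \<open>r \<noteq> 0\<close> by (simp add: u_def)
  then have "proj (insert u E) a = a"
    by (simp add: proj_insert r_def)
  moreover have "proj (insert u E) b = b" if "proj E b = b" for b
    using cinner_u[of b] that by (simp add: proj_insert)
  ultimately show ?thesis
    using E(1) orthonormal_insert by (intro exI[of _ "insert u E"]) simp
qed

lemma orthonormal_proj_fixing_exists:
  fixes A :: "'a::complex_inner set"
  assumes "finite A"
  shows "\<exists>E. finite E \<and> orthonormal E \<and> (\<forall>a\<in>A. proj E a = a)"
  using assms
proof (induction A rule: finite_induct)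
  case empty
  show ?case
    by (intro exI[of _ "{}"]) (simp add: orthonormal_def)
next
  case (insert a A)
  then obtain E where E: "finite E" "orthonormal E" "\<forall>b\<in>A. proj E b = b"
    by blast
  then obtain F where "finite F" "orthonormal F" "proj F a = a" "\<forall>b. proj E b = b \<longrightarrow> proj F b = b"
    using orthonormal_extend_to_fix[of E a] by blast
  then show ?case
    using E(3) by (intro exI[of _ F]) simp
qed

definition span_polydisc :: "'a::complex_vector set \<Rightarrow> 'a set" where
  "span_polydisc E = {(\<Sum>e\<in>E. c e *\<^sub>C e) | c. \<forall>e\<in>E. cmod (c e) \<le> 1}"

lemma span_polydisc_insert:
  assumes "e \<notin> E" "finite E"
  shows "span_polydisc (insert e E) = (\<lambda>(d, v). d *\<^sub>C e + v) ` (cball 0 1 \<times> span_polydisc E)"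
proof (intro equalityI subsetI)
  fix x assume "x \<in> span_polydisc (insert e E)"
  then obtain c where c: "\<forall>f\<in>insert e E. cmod (c f) \<le> 1" "x = (\<Sum>f\<in>insert e E. c f *\<^sub>C f)"
    by (auto simp: span_polydisc_def)
  then show "x \<in> (\<lambda>(d, v). d *\<^sub>C e + v) ` (cball 0 1 \<times> span_polydisc E)"
    using assms by (intro image_eqI[of _ _ "(c e, \<Sum>f\<in>E. c f *\<^sub>C f)"]) (auto simp: span_polydisc_def)
next
  fix x assume "x \<in> (\<lambda>(d, v). d *\<^sub>C e + v) ` (cball 0 1 \<times> span_polydisc E)"
  then obtain d c where x: "x = d *\<^sub>C e + (\<Sum>f\<in>E. c f *\<^sub>C f)" "cmod d \<le> 1" "\<forall>f\<in>E. cmod (c f) \<le> 1"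
    by (auto simp: span_polydisc_def)
  have "(\<Sum>f\<in>E. (c(e := d)) f *\<^sub>C f) = (\<Sum>f\<in>E. c f *\<^sub>C f)"
    using assms by (intro sum.cong) auto
  then have "x = (\<Sum>f\<in>insert e E. (c(e := d)) f *\<^sub>C f)"
    using assms x by simp
  moreover have "\<forall>f\<in>insert e E. cmod ((c(e := d)) f) \<le> 1"
    using x by auto
  ultimately show "x \<in> span_polydisc (insert e E)"
    unfolding span_polydisc_def by blast
qed

lemma compact_span_polydisc:
  fixes E :: "'a::complex_inner set"
  assumes "finite E"
  shows "compact (span_polydisc E)"
  using assms
proof (induction E rule: finite_induct)
  case empty
  have "span_polydisc ({}::'a set) = {0}"
    by (simp add: span_polydisc_def)
  then show ?case by simp
next
  case (insert e E)
  have "bounded_linear (\<lambda>p. fst p *\<^sub>C e + snd p)"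
    by (intro bounded_linear_add bounded_linear_compose[OF bounded_linear_scaleC_left]
        bounded_linear_fst bounded_linear_snd)
  then have "continuous_on (cball 0 1 \<times> span_polydisc E) (\<lambda>(d, v). d *\<^sub>C e + v)"
    unfolding case_prod_unfold by (rule linear_continuous_on)
  then show ?case
    unfolding span_polydisc_insert[OF insert.hyps(2,1)]
    by (intro compact_continuous_image compact_Times compact_cball insert.IH)
qed

lemma proj_in_span_polydisc:
  assumes "orthonormal E" "norm x \<le> 1"
  shows "proj E x \<in> span_polydisc E"
proof -
  have "cmod (cinner e x) \<le> 1" if "e \<in> E" for e
    using Cauchy_Schwarz_cinner[of e x] assms that by (simp add: orthonormal_def)
  then show ?thesis
    by (auto simp: span_polydisc_def proj_def)
qed

lemma finite_span_cover_if_complement_trivial: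
  fixes N :: "'a::complex_inner set"
  assumes "finite E" "csubspace N" "N \<inter> orthogonal_complement E \<subseteq> {0}"
  shows "\<exists>A. finite A \<and> N \<subseteq> complex_vector.span A"
  using assms
proof (induction E arbitrary: N rule: finite_induct)
  case empty
  then show ?case
    by (intro exI[of _ "{}"]) (auto simp: orthogonal_complement_def)
next
  case (insert e E)
  define N' where "N' = N \<inter> orthogonal_complement {e}"
  have "csubspace N'"
    unfolding N'_def by (intro csubspace_inter insert.prems csubspace_orthogonal_complement)
  moreover have "N' \<inter> orthogonal_complement E \<subseteq> {0}"
    using insert.prems(2) by (auto simp: N'_def orthogonal_complement_def)
  ultimately obtain A where A: "finite A" "N' \<subseteq> complex_vector.span A"
    using insert.IH by blast
  show ?case
  proof (cases "N \<subseteq> orthogonal_complement {e}")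
    case True
    then show ?thesis
      using A by (intro exI[of _ A]) (auto simp: N'_def)
  next
    case False
    then obtain x1 where x1: "x1 \<in> N" "cinner e x1 \<noteq> 0"
      by (auto simp: orthogonal_complement_def)
    define x0 where "x0 = (1 / cinner e x1) *\<^sub>C x1"
    have x0: "x0 \<in> N" "cinner e x0 = 1"
      using x1 insert.prems(1) by (auto simp: x0_def csubspace_scaleC cinner_scaleC_right)
    have "n \<in> complex_vector.span (insert x0 A)" if "n \<in> N" for n
    proof -
      have "n - cinner e n *\<^sub>C x0 \<in> N'"
        using that x0 insert.prems(1) by (auto simp: N'_def orthogonal_complement_def
            csubspace_diff csubspace_scaleC cinner_diff_right cinner_scaleC_right)
      then show ?thesis
        using A(2) complex_vector.span_breakdown_eq by blast
    qed
    then show ?thesis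
      using A(1) by (intro exI[of _ "insert x0 A"]) auto
  qed
qed

lemma compact_cball_inter_if_complement_trivial:
  fixes N :: "'a::complex_inner set"
  assumes "finite E" "csubspace N" "closed N" "N \<inter> orthogonal_complement E \<subseteq> {0}"
  shows "compact (N \<inter> cball 0 1)"
proof -
  obtain A where A: "finite A" "N \<subseteq> complex_vector.span A"
    using finite_span_cover_if_complement_trivial[OF assms(1,2,4)] by blast
  obtain F where F: "finite F" "orthonormal F" "\<forall>a\<in>A. proj F a = a"
    using orthonormal_proj_fixing_exists[OF A(1)] by blast
  have "N \<inter> cball 0 1 \<subseteq> span_polydisc F"
    using A(2) F proj_in_span_polydisc[OF F(2)] proj_fixes_span[OF F(3)] by fastforce
  then have "N \<inter> cball 0 1 = span_polydisc F \<inter> (N \<inter> cball 0 1)"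
    by blast
  also have "compact \<dots>"
    using assms(3) by (intro compact_Int_closed compact_span_polydisc F(1) closed_Int) auto
  finally show ?thesis .
qed

section \<open>Closest points and the Riesz representation\<close>

lemma parallelogram_law:
  "(norm (x + y))\<^sup>2 + (norm (x - y))\<^sup>2 = 2 * (norm x)\<^sup>2 + 2 * (norm (y::'a::complex_inner))\<^sup>2"
  by (simp add: norm_add_sq norm_diff_sq)

lemma norm_sq_diff_via_midpoint:
  fixes x v w :: "'a::complex_inner"
  shows "(norm (v - w))\<^sup>2
    = 2 * (norm (x - v))\<^sup>2 + 2 * (norm (x - w))\<^sup>2 - 4 * (norm (x - (1/2) *\<^sub>R (v + w)))\<^sup>2"
proof -
  have "(x - v) + (x - w) = 2 *\<^sub>R (x - (1/2) *\<^sub>R (v + w))" "(x - v) - (x - w) = w - v"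
    by (simp_all add: algebra_simps scaleR_2)
  then show ?thesis
    using parallelogram_law[of "x - v" "x - w"]
    by (simp add: power_mult_distrib norm_minus_commute[of w v])
qed

lemma minimizing_sequence_Cauchy:
  fixes V :: "'a::complex_inner set"
  assumes "csubspace V" "\<And>n. v n \<in> V" "0 \<le> d" "\<And>w. w \<in> V \<Longrightarrow> d \<le> norm (x - w)"
    and "\<And>n. (norm (x - v n))\<^sup>2 < d\<^sup>2 + 1 / Suc n"
  shows "Cauchy v"
proof (rule CauchyI)
  have close: "(norm (v m - v n))\<^sup>2 \<le> 2 / Suc m + 2 / Suc n" for m n
  proof -
    have "(1/2) *\<^sub>R (v m + v n) \<in> V"
      using assms(1,2) by (intro csubspace_scaleR csubspace_add)
    then have "(2 * d)\<^sup>2 \<le> 4 * (norm (x - (1/2) *\<^sub>R (v m + v n)))\<^sup>2"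
      using assms(3,4) by (simp add: power_mult_distrib power_mono)
    then show ?thesis
      using norm_sq_diff_via_midpoint[of "v m" "v n" x] assms(5)[of m] assms(5)[of n]
      by (simp add: power_mult_distrib)
  qed
  fix e :: real
  assume "e > 0"
  then obtain N :: nat where N: "4 / e\<^sup>2 < N"
    using reals_Archimedean2 by blast
  have "norm (v m - v n) < e" if "N \<le> m" "N \<le> n" for m n
  proof -
    have "2 / Suc m + 2 / Suc n \<le> 2 / Suc N + 2 / Suc N"
      using that by (intro add_mono divide_left_mono) auto
    also have "\<dots> = 4 / Suc N"
      by (simp only: add_divide_distrib[symmetric]) simp
    also have "\<dots> < e\<^sup>2"
    proof -
      have "4 < real N * e\<^sup>2" "0 < e\<^sup>2"
        using N \<open>e > 0\<close> by (simp_all add: field_simps)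
      moreover have "real (Suc N) * e\<^sup>2 = e\<^sup>2 + real N * e\<^sup>2"
        by (simp add: algebra_simps)
      ultimately have "4 < e\<^sup>2 * real (Suc N)"
        by (simp only: mult.commute)
      then show ?thesis
        by (simp only: pos_divide_less_eq of_nat_0_less_iff zero_less_Suc)
    qed
    finally have "(norm (v m - v n))\<^sup>2 < e\<^sup>2"
      using close[of m n] by linarith
    then show ?thesis
      using power_less_imp_less_base \<open>e > 0\<close> by fastforce
  qed
  then show "\<exists>M. \<forall>m\<ge>M. \<forall>n\<ge>M. norm (v m - v n) < e"
    by blast
qed

lemma closest_point_csubspace:
  fixes V :: "'a::chilbert_space set"
  assumes V: "csubspace V" "closed V"
  shows "\<exists>p\<in>V. \<forall>v\<in>V. norm (x - p) \<le> norm (x - v)"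
proof -
  define d where "d = infdist x V"
  have "V \<noteq> {}"
    using csubspace_0[OF V(1)] by blast
  have d_le: "d \<le> norm (x - v)" if "v \<in> V" for v
    using infdist_le[OF that, of x] by (simp add: d_def dist_norm)
  have "\<exists>v. v \<in> V \<and> (norm (x - v))\<^sup>2 < d\<^sup>2 + 1 / Suc n" for n
  proof -
    have "infdist x V < sqrt (d\<^sup>2 + 1 / Suc n)"
      by (intro real_less_rsqrt) (simp add: d_def)
    then have "\<exists>v\<in>V. dist x v < sqrt (d\<^sup>2 + 1 / Suc n)"
      using cINF_less_iff[OF \<open>V \<noteq> {}\<close> bdd_below_image_dist] by (simp add: infdist_notempty[OF \<open>V \<noteq> {}\<close>])
    then show ?thesis
      using real_sqrt_less_iff[of "(norm (x - v))\<^sup>2" "d\<^sup>2 + 1 / Suc n" for v]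
      by (auto simp: dist_norm)
  qed
  then obtain v where v: "\<And>n. v n \<in> V" "\<And>n. (norm (x - v n))\<^sup>2 < d\<^sup>2 + 1 / Suc n"
    using choice[of "\<lambda>n v. v \<in> V \<and> (norm (x - v))\<^sup>2 < d\<^sup>2 + 1 / Suc n"] by blast
  have "Cauchy v"
    by (rule minimizing_sequence_Cauchy[OF V(1) v(1) _ d_le v(2)]) (simp add: d_def infdist_nonneg)
  then obtain p where p: "v \<longlonglongrightarrow> p"
    using Cauchy_convergent_iff convergent_def by blast
  have "p \<in> V"
    using V(2) v(1) p closed_sequentially by blast
  have "(\<lambda>n. (norm (x - v n))\<^sup>2) \<longlonglongrightarrow> (norm (x - p))\<^sup>2"
    by (intro tendsto_intros p)
  moreover have "(\<lambda>n. d\<^sup>2 + 1 / Suc n) \<longlonglongrightarrow> d\<^sup>2 + 0"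
    by (intro tendsto_add tendsto_const LIMSEQ_Suc[OF lim_const_over_n])
  ultimately have "(norm (x - p))\<^sup>2 \<le> d\<^sup>2 + 0"
    by (rule LIMSEQ_le) (intro exI[of _ 0] allI impI less_imp_le v(2))
  then have "norm (x - p) \<le> d"
    using power2_le_imp_le[of "norm (x - p)" d] by (simp add: d_def infdist_nonneg)
  then show ?thesis
    using \<open>p \<in> V\<close> d_le by (meson order_trans)
qed

lemma orthogonal_projection_exists:
  fixes V :: "'a::chilbert_space set"
  assumes "csubspace V" "closed V"
  shows "\<exists>p\<in>V. x - p \<in> orthogonal_complement V"
proof -
  obtain p where p: "p \<in> V" "\<And>v. v \<in> V \<Longrightarrow> norm (x - p) \<le> norm (x - v)"
    using closest_point_csubspace[OF assms] by blast
  have "cinner w (x - p) = 0" if "w \<in> V" for w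
  proof (rule cinner_eq_0_if_norm_minimal)
    fix c
    have "p + c *\<^sub>C w \<in> V"
      using that p(1) assms(1) by (intro csubspace_add csubspace_scaleC)
    then show "(norm (x - p))\<^sup>2 \<le> (norm (x - p - c *\<^sub>C w))\<^sup>2"
      using p(2) by (simp add: power_mono diff_diff_eq)
  qed
  then show ?thesis
    using p(1) by (auto simp: orthogonal_complement_def)
qed

lemma riesz_representation:
  fixes \<phi> :: "'a::chilbert_space \<Rightarrow> complex"
  assumes \<phi>: "bounded_linear \<phi>" and \<phi>_scaleC: "\<And>c x. \<phi> (c *\<^sub>C x) = c * \<phi> x"
  shows "\<exists>r. \<forall>y. \<phi> y = cinner r y"
proof (cases "\<forall>x. \<phi> x = 0")
  case False
  then obtain x where x: "\<phi> x \<noteq> 0"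
    by blast
  interpret \<phi>: bounded_linear \<phi> by fact
  define K where "K = {v. \<phi> v = 0}"
  have "csubspace K" "closed K"
    unfolding K_def csubspace_def using \<phi>_scaleC
    by (auto simp: \<phi>.add intro!: closed_Collect_eq continuous_intros \<phi>.continuous_on)
  then obtain p where p: "p \<in> K" "x - p \<in> orthogonal_complement K"
    using orthogonal_projection_exists by blast
  define w where "w = x - p"
  have "\<phi> w = \<phi> x"
    using p(1) by (simp add: w_def \<phi>.diff K_def)
  then have "w \<noteq> 0"
    using x by auto
  have "\<phi> y = cinner ((cnj (\<phi> w) / cinner w w) *\<^sub>C w) y" for y
  proof -
    have "\<phi> y *\<^sub>C w - \<phi> w *\<^sub>C y \<in> K"
      by (simp add: K_def \<phi>.diff \<phi>_scaleC mult.commute)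
    then have "cinner w (\<phi> y *\<^sub>C w - \<phi> w *\<^sub>C y) = 0"
      using p(2) cinner_eq_0_sym by (auto simp: w_def orthogonal_complement_def)
    then have "\<phi> y * cinner w w = \<phi> w * cinner w y"
      by (simp add: cinner_diff_right cinner_scaleC_right)
    then show ?thesis
      using \<open>w \<noteq> 0\<close> by (simp add: cinner_scaleC_left cinner_self field_simps)
  qed
  then show ?thesis
    by blast
qed (intro exI[of _ 0], simp)

section \<open>The Hilbert direct sum\<close>

instantiation prod :: (complex_inner, complex_inner) complex_inner
begin

definition cinner_prod_def: "cinner x y = cinner (fst x) (fst y) + cinner (snd x) (snd y)"

instance
proof
  fix x y z :: "'a \<times> 'b" and a :: complex
  show "cinner x y = cnj (cinner y x)"
    by (simp add: cinner_prod_def) (metis cinner_conj)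
  show "cinner x (y + z) = cinner x y + cinner x z"
    by (simp add: cinner_prod_def cinner_add_right)
  show "cinner x (a *\<^sub>C y) = a * cinner x y"
    by (simp add: cinner_prod_def scaleC_prod_def cinner_scaleC_right distrib_left)
  show "norm x = sqrt (Re (cinner x x))"
    by (simp add: cinner_prod_def norm_prod_def cinner_self)
qed

end

instance prod :: (chilbert_space, chilbert_space) chilbert_space ..

lemma norm_Pair_sq: "(norm (a, b))\<^sup>2 = (norm a)\<^sup>2 + (norm b)\<^sup>2"
  by (simp add: norm_Pair)

section \<open>Complex-linear operators and adjoints\<close>

lemma clinear_sum:
  assumes "clinear f"
  shows "f (\<Sum>v\<in>F. c v *\<^sub>C v) = (\<Sum>v\<in>F. c v *\<^sub>C f v)"
proof -
  interpret f: Modules.additive f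
    using assms by unfold_locales (simp add: clinear_def)
  show ?thesis
    using assms by (simp add: f.sum clinear_def)
qed

lemma clinear_adjoint:
  fixes C :: "'b::complex_inner \<Rightarrow>\<^sub>L 'a::complex_inner" and D :: "'a \<Rightarrow>\<^sub>L 'b"
  assumes "\<And>x y. cinner (C x) y = cinner x (D y)" "clinear (blinfun_apply C)"
  shows "clinear (blinfun_apply D)"
  unfolding clinear_def
proof (intro conjI allI)
  show "D (x + y) = D x + D y" for x y
    by (simp add: blinfun.add_right)
  show "D (c *\<^sub>C x) = c *\<^sub>C D x" for c x
    using assms by (intro cinner_ext) (simp add: assms(1)[symmetric] cinner_scaleC_right clinear_def
        cinner_scaleC_left)
qed

lemma adjoint_norm_bound:
  fixes D :: "'b::complex_inner \<Rightarrow> 'a::complex_inner" and D' :: "'a \<Rightarrow> 'b"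
  assumes "\<And>x y. cinner (D x) y = cinner x (D' y)" "\<And>y. norm (D y) \<le> e * norm y" "0 \<le> e"
  shows "norm (D' x) \<le> e * norm x"
proof (cases "D' x = 0")
  case False
  have "(norm (D' x))\<^sup>2 = Re (cinner (D (D' x)) x)"
    by (simp add: assms(1) cinner_self)
  also have "\<dots> \<le> norm (D (D' x)) * norm x"
    using complex_Re_le_cmod Cauchy_Schwarz_cinner order_trans by blast
  also have "\<dots> \<le> e * norm (D' x) * norm x"
    using assms(2) by (simp add: mult_right_mono)
  finally show ?thesis
    using False by (simp add: power2_eq_square mult_ac)
qed (simp add: assms(3))

section \<open>Norm attainment\<close>

lemma norm_attaining_onI:
  fixes S :: "'a::real_normed_vector \<Rightarrow>\<^sub>L 'b::real_normed_vector"
  assumes "x \<in> M" "norm x = 1" "\<And>y. y \<in> M \<Longrightarrow> norm y = 1 \<Longrightarrow> norm (S y) \<le> norm (S x)"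
  shows "norm_attaining_on M S"
proof -
  have "Sup {norm (S y) | y. y \<in> M \<and> norm y = 1} = norm (S x)"
    using assms by (intro cSup_eq_maximum) auto
  then show ?thesis
    unfolding norm_attaining_on_def using assms(1,2) by auto
qed

lemma norm_attaining_on_if_compact_sphere:
  fixes S :: "'a::real_normed_vector \<Rightarrow>\<^sub>L 'b::real_normed_vector"
  assumes "compact (M \<inter> sphere 0 1)" "M \<inter> sphere 0 1 \<noteq> {}"
  shows "norm_attaining_on M S"
proof -
  have "continuous_on (M \<inter> sphere 0 1) (\<lambda>x. norm (S x))"
    by (intro continuous_intros)
  then obtain x where "x \<in> M \<inter> sphere 0 1" "\<forall>y\<in>M \<inter> sphere 0 1. norm (S y) \<le> norm (S x)"
    using continuous_attains_sup[OF assms] by blast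
  then show ?thesis
    by (intro norm_attaining_onI[of x]) auto
qed

lemma csubspace_closure:
  assumes "csubspace (M::'a::complex_inner set)"
  shows "csubspace (closure M)"
  unfolding csubspace_def
proof (intro conjI ballI allI)
  show "0 \<in> closure M"
    using csubspace_0[OF assms] closure_subset by blast
next
  fix x y assume "x \<in> closure M" "y \<in> closure M"
  then obtain xs ys where "\<forall>n. xs n \<in> M" "xs \<longlonglongrightarrow> x" "\<forall>n. ys n \<in> M" "ys \<longlonglongrightarrow> y"
    unfolding closure_sequential by blast
  then show "x + y \<in> closure M"
    unfolding closure_sequential
    by (intro exI[of _ "\<lambda>n. xs n + ys n"]) (auto intro: tendsto_intros csubspace_add[OF assms])
next
  fix c x assume "x \<in> closure M"
  then obtain xs where "\<forall>n. xs n \<in> M" "xs \<longlonglongrightarrow> x"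
    unfolding closure_sequential by blast
  then show "c *\<^sub>C x \<in> closure M"
    unfolding closure_sequential
    by (intro exI[of _ "\<lambda>n. c *\<^sub>C xs n"]) (auto intro: tendsto_intros csubspace_scaleC[OF assms])
qed

lemma csubspace_unit_vector:
  assumes "csubspace M" "M \<noteq> {0}"
  obtains x where "x \<in> M" "norm x = 1"
proof -
  obtain m where "m \<in> M" "m \<noteq> 0"
    using assms csubspace_0 by blast
  then show ?thesis
    using assms(1) by (intro that[of "(1 / norm m) *\<^sub>R m"]) (auto intro: csubspace_scaleR)
qed

lemma norm_pad_unit:
  fixes n k :: "'a::complex_inner"
  assumes "norm n \<le> 1" "norm k = 1" "cinner k n = 0"
  shows "norm (n + sqrt (1 - (norm n)\<^sup>2) *\<^sub>R k) = 1"
proof -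
  have "(norm (n + sqrt (1 - (norm n)\<^sup>2) *\<^sub>R k))\<^sup>2 = (norm n)\<^sup>2 + (norm (sqrt (1 - (norm n)\<^sup>2) *\<^sub>R k))\<^sup>2"
    using assms(3) by (intro pythagoras) (simp add: cinner_scaleR_right cinner_eq_0_sym)
  also have "\<dots> = 1"
    using assms(1,2) by (simp add: abs_le_square_iff power_le_one)
  finally have "(norm (n + sqrt (1 - (norm n)\<^sup>2) *\<^sub>R k))\<^sup>2 = 1\<^sup>2"
    by simp
  then show ?thesis
    by (rule power2_eq_imp_eq) simp_all
qed

lemma csubspace_finite_codim_decomposition:
  fixes M :: "'a::chilbert_space set"
  assumes "finite E" "csubspace M" "closed M"
  defines "K \<equiv> M \<inter> orthogonal_complement E"
  defines "N \<equiv> M \<inter> orthogonal_complement K"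
  shows "compact (N \<inter> cball 0 1)"
    and "v \<in> M \<Longrightarrow> \<exists>k\<in>K. \<exists>n\<in>N. v = k + n \<and> (norm v)\<^sup>2 = (norm k)\<^sup>2 + (norm n)\<^sup>2
      \<and> proj E v = proj E n"
proof -
  have K: "csubspace K" "closed K" and N: "csubspace N" "closed N"
    using assms(2,3) by (auto simp: K_def N_def intro!: csubspace_inter closed_Int
        csubspace_orthogonal_complement closed_orthogonal_complement)
  have "n = 0" if "n \<in> N \<inter> orthogonal_complement E" for n
  proof -
    have "n \<in> K"
      using that by (simp add: N_def K_def)
    then have "cinner n n = 0"
      using that by (simp add: N_def orthogonal_complement_def)
    then show ?thesis
      by simp
  qed
  then have "N \<inter> orthogonal_complement E \<subseteq> {0}"
    by blast
  then show "compact (N \<inter> cball 0 1)"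
    using compact_cball_inter_if_complement_trivial[OF assms(1) N] by blast
  show "\<exists>k\<in>K. \<exists>n\<in>N. v = k + n \<and> (norm v)\<^sup>2 = (norm k)\<^sup>2 + (norm n)\<^sup>2
      \<and> proj E v = proj E n" if "v \<in> M"
  proof -
    obtain k where k: "k \<in> K" "v - k \<in> orthogonal_complement K"
      using orthogonal_projection_exists[OF K] by blast
    then have "v - k \<in> N"
      using \<open>v \<in> M\<close> assms(2) by (auto simp: N_def K_def intro: csubspace_diff)
    moreover have "(norm v)\<^sup>2 = (norm k)\<^sup>2 + (norm (v - k))\<^sup>2"
      using pythagoras[of k "v - k"] k by (simp add: orthogonal_complement_def)
    moreover have "proj E v = proj E (v - k)"
      using k(1) by (simp add: proj_diff proj_eq_0 K_def)
    ultimately show ?thesis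
      using k(1) by (intro bexI[of _ k] bexI[of _ "v - k"]) auto
  qed
qed

lemma norm_attaining_on_if_complement_trivial:
  fixes S :: "'a::complex_inner \<Rightarrow>\<^sub>L 'b::real_normed_vector"
  assumes "finite E" "csubspace M" "closed M" "M \<noteq> {0}" "M \<inter> orthogonal_complement E \<subseteq> {0}"
  shows "norm_attaining_on M S"
proof -
  have "compact (M \<inter> cball 0 1 \<inter> sphere 0 1)"
    using compact_cball_inter_if_complement_trivial[OF assms(1-3,5)]
    by (rule compact_Int_closed) (simp add: sphere_def closed_Collect_eq continuous_intros)
  moreover have "M \<inter> cball 0 1 \<inter> sphere 0 1 = M \<inter> sphere 0 1"
    by auto
  moreover obtain u where "u \<in> M" "norm u = 1"
    using csubspace_unit_vector[OF assms(2,4)] .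
  ultimately show ?thesis
    by (intro norm_attaining_on_if_compact_sphere) auto
qed

lemma proj_max_on_unit_sphere:
  fixes M :: "'a::chilbert_space set" and g :: "'a \<Rightarrow> real"
  assumes E: "finite E" and M: "csubspace M" "closed M"
    and "\<not> M \<inter> orthogonal_complement E \<subseteq> {0}" and g: "continuous_on UNIV g"
  shows "\<exists>x\<in>M. norm x = 1 \<and> (\<forall>y\<in>M. norm y = 1 \<longrightarrow> g (proj E y) \<le> g (proj E x))"
proof -
  define K where "K = M \<inter> orthogonal_complement E"
  define N where "N = M \<inter> orthogonal_complement K"
  note N_ball = csubspace_finite_codim_decomposition(1)[OF E M, folded K_def N_def]
  note split = csubspace_finite_codim_decomposition(2)[OF E M, folded K_def N_def]
  have "csubspace K"
    by (simp add: K_def M(1) csubspace_inter csubspace_orthogonal_complement)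
  moreover have "K \<noteq> {0}"
    using assms(4) by (auto simp: K_def)
  ultimately obtain k where k: "k \<in> K" "norm k = 1"
    using csubspace_unit_vector by blast
  have "continuous_on (N \<inter> cball 0 1) (\<lambda>v. g (proj E v))"
    by (rule continuous_on_compose2[OF g linear_continuous_on[OF bounded_linear_proj]]) simp
  moreover have "0 \<in> N \<inter> cball 0 1"
    using M(1) by (simp add: N_def csubspace_0 orthogonal_complement_def)
  ultimately obtain n where "n \<in> N \<inter> cball 0 1" "\<forall>m\<in>N \<inter> cball 0 1. g (proj E m) \<le> g (proj E n)"
    using continuous_attains_sup[OF N_ball] by (metis empty_iff)
  then have n: "n \<in> N" "norm n \<le> 1" "\<And>m. m \<in> N \<Longrightarrow> norm m \<le> 1 \<Longrightarrow> g (proj E m) \<le> g (proj E n)"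
    by auto
  define x where "x = n + sqrt (1 - (norm n)\<^sup>2) *\<^sub>R k"
  have "k \<in> M" "n \<in> M" "cinner k n = 0" "proj E k = 0"
    using k(1) n(1) by (auto simp: K_def N_def orthogonal_complement_def intro: proj_eq_0)
  then have x: "x \<in> M" "norm x = 1" "proj E x = proj E n"
    using M(1) n(2) k(2) norm_pad_unit
    by (auto simp: x_def proj_add proj_scaleR intro: csubspace_add csubspace_scaleR)
  have "g (proj E y) \<le> g (proj E x)" if "y \<in> M" "norm y = 1" for y
  proof -
    obtain k' m where km: "m \<in> N" "k' \<in> K" "(norm y)\<^sup>2 = (norm k')\<^sup>2 + (norm m)\<^sup>2" "proj E y = proj E m"
      using split[OF \<open>y \<in> M\<close>] by blast
    then have "(norm m)\<^sup>2 \<le> 1\<^sup>2"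
      using \<open>norm y = 1\<close> by (metis le_add_same_cancel2 zero_le_power2)
    then have "norm m \<le> 1"
      by (rule power2_le_imp_le) simp
    then show ?thesis
      using n(3)[OF km(1)] x(3) km(4) by simp
  qed
  then show ?thesis
    using x(1,2) by blast
qed

lemma norm_attaining_on_if_defect_factors_through_proj:
  fixes S :: "'h::chilbert_space \<Rightarrow>\<^sub>L 'h"
  assumes E: "finite E" "orthonormal E"
    and defect: "\<And>v. (norm (S v))\<^sup>2 - (norm v)\<^sup>2 = (norm (S (proj E v)))\<^sup>2 - (norm (proj E v))\<^sup>2"
    and M: "csubspace M" "closed M" "M \<noteq> {0}"
  shows "norm_attaining_on M S"
proof (cases "M \<inter> orthogonal_complement E \<subseteq> {0}")
  case True
  then show ?thesis
    using norm_attaining_on_if_complement_trivial[OF E(1) M] by simp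
next
  case False
  define g where "g w = (norm (S w))\<^sup>2 - (norm w)\<^sup>2" for w
  have "continuous_on UNIV g"
    unfolding g_def by (intro continuous_intros)
  then obtain x where x: "x \<in> M" "norm x = 1"
    and max: "\<And>y. y \<in> M \<Longrightarrow> norm y = 1 \<Longrightarrow> g (proj E y) \<le> g (proj E x)"
    using proj_max_on_unit_sphere[OF E(1) M(1,2) False] by blast
  from x show ?thesis
  proof (rule norm_attaining_onI)
    fix y assume "y \<in> M" "norm y = 1"
    then have "(norm (S y))\<^sup>2 - (norm y)\<^sup>2 \<le> (norm (S x))\<^sup>2 - (norm x)\<^sup>2"
      using max[of y] defect[of y] defect[of x] unfolding g_def by linarith
    then have "(norm (S y))\<^sup>2 \<le> (norm (S x))\<^sup>2"
      using \<open>norm y = 1\<close> x(2) by simp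
    then show "norm (S y) \<le> norm (S x)"
      by (rule power2_le_imp_le) simp
  qed
qed

lemma AN_if_finite_rank_perturbation_of_identity:
  fixes S :: "'h::chilbert_space \<Rightarrow>\<^sub>L 'h"
  assumes "clinear (blinfun_apply S)" "finite E" "orthonormal E"
    and kernel: "\<And>v. S (proj E v) - proj E v = S v - v"
    and range: "\<And>v. proj E (S v - v) = S v - v"
  shows "S \<in> AN"
proof -
  have "(norm (S v))\<^sup>2 - (norm v)\<^sup>2 = (norm (S (proj E v)))\<^sup>2 - (norm (proj E v))\<^sup>2" for v
  proof -
    define G where "G w = S w - w" for w
    have G_proj: "G (proj E v) = G v"
      using kernel by (simp add: G_def)
    have "cinner v (G v) = cinner v (proj E (G v))"
      using range by (simp add: G_def)
    also have "\<dots> = cinner (proj E v) (G (proj E v))"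
      by (simp add: cinner_proj_left G_proj)
    finally have inner: "cinner v (G v) = cinner (proj E v) (G (proj E v))" .
    have "S w = w + G w" for w
      by (simp add: G_def)
    then have "(norm (S w))\<^sup>2 - (norm w)\<^sup>2 = (norm (G w))\<^sup>2 + 2 * Re (cinner w (G w))" for w
      by (simp add: norm_add_sq)
    then show ?thesis
      using inner G_proj by simp
  qed
  then show ?thesis
    using assms(1-3) norm_attaining_on_if_defect_factors_through_proj[of E S]
    by (simp add: AN_def BOps_def)
qed

lemma norm_sq_sum_orthogonal:
  fixes g :: "'i \<Rightarrow> 'a::complex_inner"
  assumes "finite F" "\<And>u v. u \<in> F \<Longrightarrow> v \<in> F \<Longrightarrow> u \<noteq> v \<Longrightarrow> cinner (g u) (g v) = 0"
  shows "(norm (\<Sum>v\<in>F. g v))\<^sup>2 = (\<Sum>v\<in>F. (norm (g v))\<^sup>2)"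
  using assms
proof (induction F rule: finite_induct)
  case (insert a F)
  then have "cinner (g a) (\<Sum>v\<in>F. g v) = 0"
    by (auto simp: cinner_sum_right intro!: sum.neutral)
  then show ?case
    using insert by (simp add: pythagoras)
qed simp

lemma closure_span_orthogonal_eq_0:
  fixes U :: "'a::complex_inner set"
  assumes "w \<in> closure (complex_vector.span U)" "w \<in> orthogonal_complement U"
  shows "w = 0"
proof -
  have "complex_vector.subspace {z. cinner w z = 0}"
    by (simp add: complex_vector.subspace_def cinner_add_right cinner_scaleC_right)
  moreover have "U \<subseteq> {z. cinner w z = 0}"
    using assms(2) by (auto simp: orthogonal_complement_def cinner_eq_0_sym)
  ultimately have "complex_vector.span U \<subseteq> {z. cinner w z = 0}"
    by (rule complex_vector.span_minimal[rotated])
  moreover have "closed {z. cinner w z = 0}"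
    by (intro closed_Collect_eq continuous_intros)
  ultimately have "cinner w w = 0"
    using assms(1) closure_minimal by blast
  then show ?thesis
    by simp
qed

lemma cinner_image_closure_span:
  fixes S :: "'a::complex_inner \<Rightarrow>\<^sub>L 'b::complex_inner"
  assumes "clinear (blinfun_apply S)" "orthonormal U"
    and "\<And>x y. x \<in> U \<Longrightarrow> y \<in> U \<Longrightarrow> x \<noteq> y \<Longrightarrow> cinner (S x) (S y) = 0"
    and "x \<in> U" "w \<in> closure (complex_vector.span U)"
  shows "cinner (S x) (S w) = of_real ((norm (S x))\<^sup>2) * cinner x w"
proof -
  define Z where "Z = {w. cinner (S x) (S w) = of_real ((norm (S x))\<^sup>2) * cinner x w}"
  have "complex_vector.subspace Z"
    using assms(1) by (simp add: Z_def complex_vector.subspace_def clinear_def cinner_add_right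
        cinner_scaleC_right algebra_simps)
  moreover have "u \<in> Z" if "u \<in> U" for u
  proof (cases "u = x")
    case True
    then show ?thesis
      using assms(2,4) by (simp add: Z_def orthonormal_def cinner_self)
  next
    case False
    then show ?thesis
      using assms(2-4) that by (simp add: Z_def orthonormal_def)
  qed
  ultimately have "complex_vector.span U \<subseteq> Z"
    by (intro complex_vector.span_minimal) auto
  moreover have "closed Z"
    unfolding Z_def by (intro closed_Collect_eq continuous_intros)
  ultimately show ?thesis
    using assms(5) closure_minimal unfolding Z_def by blast
qed

lemma norm_image_sq_le_span:
  fixes S :: "'a::complex_inner \<Rightarrow>\<^sub>L 'b::complex_inner"
  assumes "clinear (blinfun_apply S)" "orthonormal U"
    and S_orth: "\<And>x y. x \<in> U \<Longrightarrow> y \<in> U \<Longrightarrow> x \<noteq> y \<Longrightarrow> cinner (S x) (S y) = 0"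
    and S_le: "\<And>u. u \<in> U \<Longrightarrow> (norm (S u))\<^sup>2 \<le> b"
    and "w \<in> complex_vector.span U"
  shows "(norm (S w))\<^sup>2 \<le> b * (norm w)\<^sup>2"
proof -
  obtain F c where F: "finite F" "F \<subseteq> U" "w = (\<Sum>v\<in>F. c v *\<^sub>C v)"
    using assms(5) unfolding complex_vector.span_explicit by auto
  have unit: "norm v = 1" if "v \<in> F" for v
    using that F(2) assms(2) by (auto simp: orthonormal_def)
  have "(norm (S w))\<^sup>2 = (\<Sum>v\<in>F. (cmod (c v))\<^sup>2 * (norm (S v))\<^sup>2)"
    unfolding F(3) clinear_sum[OF assms(1)] using F(1,2) S_orth
    by (subst norm_sq_sum_orthogonal)
      (auto simp: cinner_scaleC_left cinner_scaleC_right norm_scaleC power_mult_distrib)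
  also have "\<dots> \<le> (\<Sum>v\<in>F. (cmod (c v))\<^sup>2 * b)"
    using F(2) S_le by (intro sum_mono mult_left_mono) auto
  also have "\<dots> = b * (\<Sum>v\<in>F. (cmod (c v))\<^sup>2)"
    by (simp add: sum_distrib_left mult.commute)
  also have "(\<Sum>v\<in>F. (cmod (c v))\<^sup>2) = (norm w)\<^sup>2"
    unfolding F(3) using F(1,2) assms(2) unit
    by (subst norm_sq_sum_orthogonal) (auto simp: cinner_scaleC_left cinner_scaleC_right
        norm_scaleC orthonormal_def subset_iff)
  finally show ?thesis .
qed

lemma norm_image_sq_le_closure_span:
  fixes S :: "'a::complex_inner \<Rightarrow>\<^sub>L 'b::complex_inner"
  assumes "clinear (blinfun_apply S)" "orthonormal U"
    and "\<And>x y. x \<in> U \<Longrightarrow> y \<in> U \<Longrightarrow> x \<noteq> y \<Longrightarrow> cinner (S x) (S y) = 0"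
    and "\<And>u. u \<in> U \<Longrightarrow> (norm (S u))\<^sup>2 \<le> b"
    and "w \<in> closure (complex_vector.span U)"
  shows "(norm (S w))\<^sup>2 \<le> b * (norm w)\<^sup>2"
proof -
  have "complex_vector.span U \<subseteq> {w. (norm (S w))\<^sup>2 \<le> b * (norm w)\<^sup>2}"
    using norm_image_sq_le_span[OF assms(1-4)] by blast
  moreover have "closed {w. (norm (S w))\<^sup>2 \<le> b * (norm w)\<^sup>2}"
    by (intro closed_Collect_le continuous_intros)
  ultimately show ?thesis
    using assms(5) closure_minimal by blast
qed

lemma csubspace_closure_span: "csubspace (closure (complex_vector.span (U::'a::complex_inner set)))"
  by (intro csubspace_closure) (simp add: csubspace_iff_subspace)

lemma in_closure_span: "u \<in> U \<Longrightarrow> u \<in> closure (complex_vector.span U)"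
  using closure_subset complex_vector.span_base by blast

lemma norm_image_sq_le_split_off:
  fixes S :: "'a::complex_inner \<Rightarrow>\<^sub>L 'b::complex_inner"
  assumes clin: "clinear (blinfun_apply S)" and U: "orthonormal U"
    and S_orth: "\<And>x y. x \<in> U \<Longrightarrow> y \<in> U \<Longrightarrow> x \<noteq> y \<Longrightarrow> cinner (S x) (S y) = 0"
    and S_le: "\<And>u. u \<in> U \<Longrightarrow> (norm (S u))\<^sup>2 \<le> b"
    and u: "u \<in> U" and v: "v \<in> closure (complex_vector.span U)"
  shows "(norm (S v))\<^sup>2
    \<le> (cmod (cinner u v))\<^sup>2 * (norm (S u))\<^sup>2 + b * ((norm v)\<^sup>2 - (cmod (cinner u v))\<^sup>2)"
proof -
  define c where "c = cinner u v"
  define z where "z = v - c *\<^sub>C u"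
  have z: "z \<in> closure (complex_vector.span U)"
    unfolding z_def using v in_closure_span[OF u]
    by (intro csubspace_diff csubspace_scaleC csubspace_closure_span)
  have "cinner u u = 1"
    using u U by (simp add: orthonormal_def cinner_self)
  then have uz: "cinner u z = 0"
    by (simp add: z_def c_def cinner_diff_right cinner_scaleC_right)
  then have "cinner (S u) (S z) = 0"
    using cinner_image_closure_span[OF clin U S_orth u z] by simp
  then have "(norm (S v))\<^sup>2 = (cmod c)\<^sup>2 * (norm (S u))\<^sup>2 + (norm (S z))\<^sup>2"
    using clin pythagoras[of "c *\<^sub>C S u" "S z"]
    by (simp add: z_def clinear_def blinfun.diff_right cinner_scaleC_left norm_scaleC power_mult_distrib)
  moreover have "(norm v)\<^sup>2 = (cmod c)\<^sup>2 + (norm z)\<^sup>2"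
    using pythagoras[of "c *\<^sub>C u" z] uz u U
    by (simp add: z_def cinner_scaleC_left norm_scaleC orthonormal_def)
  moreover have "(norm (S z))\<^sup>2 \<le> b * (norm z)\<^sup>2"
    by (rule norm_image_sq_le_closure_span[OF clin U S_orth S_le z])
  ultimately show ?thesis
    by (simp add: c_def)
qed

lemma norm_image_sq_less_closure_span:
  fixes S :: "'a::complex_inner \<Rightarrow>\<^sub>L 'b::complex_inner"
  assumes clin: "clinear (blinfun_apply S)" and U: "orthonormal U"
    and S_orth: "\<And>x y. x \<in> U \<Longrightarrow> y \<in> U \<Longrightarrow> x \<noteq> y \<Longrightarrow> cinner (S x) (S y) = 0"
    and S_less: "\<And>u. u \<in> U \<Longrightarrow> (norm (S u))\<^sup>2 < b"
    and v: "v \<in> closure (complex_vector.span U)" "norm v = 1"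
  shows "(norm (S v))\<^sup>2 < b"
proof (rule ccontr)
  assume "\<not> (norm (S v))\<^sup>2 < b"
  have "cinner u v = 0" if u: "u \<in> U" for u
  proof (rule ccontr)
    assume "cinner u v \<noteq> 0"
    define c where "c = (cmod (cinner u v))\<^sup>2"
    have "c > 0"
      using \<open>cinner u v \<noteq> 0\<close> by (simp add: c_def)
    have "b \<le> c * (norm (S u))\<^sup>2 + b * (1 - c)"
      using norm_image_sq_le_split_off[OF clin U S_orth _ u v(1)] S_less less_imp_le
        \<open>\<not> (norm (S v))\<^sup>2 < b\<close> v(2) unfolding c_def by fastforce
    then have "c * b \<le> c * (norm (S u))\<^sup>2"
      by (simp add: algebra_simps)
    then show False
      using S_less[OF u] \<open>c > 0\<close> by simp
  qed
  then have "v = 0"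
    using closure_span_orthogonal_eq_0[OF v(1)] by (simp add: orthogonal_complement_def)
  then show False
    using v(2) by simp
qed

lemma not_norm_attaining_on_closure_span:
  fixes S :: "'a::complex_inner \<Rightarrow>\<^sub>L 'b::complex_inner"
  assumes "clinear (blinfun_apply S)" "orthonormal U"
    and "\<And>x y. x \<in> U \<Longrightarrow> y \<in> U \<Longrightarrow> x \<noteq> y \<Longrightarrow> cinner (S x) (S y) = 0"
    and "\<And>u. u \<in> U \<Longrightarrow> (norm (S u))\<^sup>2 < b"
    and sup: "\<And>e. e > 0 \<Longrightarrow> \<exists>u\<in>U. b - e < (norm (S u))\<^sup>2"
  shows "\<not> norm_attaining_on (closure (complex_vector.span U)) S"
proof
  assume "norm_attaining_on (closure (complex_vector.span U)) S"
  then obtain x where x: "x \<in> closure (complex_vector.span U)" "norm x = 1"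
    "norm (S x) = Sup {norm (S y) | y. y \<in> closure (complex_vector.span U) \<and> norm y = 1}"
    unfolding norm_attaining_on_def by blast
  have "bdd_above {norm (S y) | y. y \<in> closure (complex_vector.span U) \<and> norm y = 1}"
    by (intro bdd_aboveI[of _ "norm S"]) (auto intro: norm_blinfun[of S, THEN order_trans])
  then have "norm (S u) \<le> norm (S x)" if "u \<in> U" for u
    unfolding x(3) using that assms(2) in_closure_span[of u U]
    by (intro cSup_upper) (auto simp: orthonormal_def)
  then have le: "(norm (S u))\<^sup>2 \<le> (norm (S x))\<^sup>2" if "u \<in> U" for u
    using that by (simp add: power_mono)
  have "(norm (S x))\<^sup>2 < b"
    using norm_image_sq_less_closure_span[OF assms(1-4) x(1,2)] .
  then obtain u where "u \<in> U" "(norm (S x))\<^sup>2 < (norm (S u))\<^sup>2"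
    using sup[of "b - (norm (S x))\<^sup>2"] by auto
  then show False
    using le by fastforce
qed

lemma csubspace_unit_vector_with_image_norm:
  fixes S :: "'a::complex_inner \<Rightarrow>\<^sub>L 'b::real_normed_vector"
  assumes V: "csubspace V" "v \<in> V" "w \<in> V" and unit: "norm v = 1" "norm w = 1"
    and "norm (S v) \<le> a" "b \<le> norm (S w)" "a < m" "m < b"
  shows "\<exists>u\<in>V. norm u = 1 \<and> norm (S u) = m"
proof -
  define z where "z t = (1 - t) *\<^sub>R v + t *\<^sub>R w" for t :: real
  define f where "f t = norm (S (z t)) - m * norm (z t)" for t
  have "continuous_on {0..1} f"
    unfolding f_def z_def by (intro continuous_intros)
  moreover have "f 0 \<le> 0" "0 \<le> f 1"
    using assms by (simp_all add: f_def z_def)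
  ultimately obtain t where t: "0 \<le> t" "t \<le> 1" "f t = 0"
    using IVT'[of f 0 0 1] by auto
  have "z t \<noteq> 0"
  proof
    assume "z t = 0"
    then have eq: "(1 - t) *\<^sub>R v = (- t) *\<^sub>R w"
      by (simp add: z_def eq_neg_iff_add_eq_0)
    have "norm ((1 - t) *\<^sub>R v) = norm ((- t) *\<^sub>R w)"
      by (simp only: eq)
    then have "\<bar>1 - t\<bar> = \<bar>t\<bar>"
      using unit by simp
    then have "1 - t = t" "t \<noteq> 0"
      using t(1,2) by auto
    then have "v = - w"
      using eq by (metis scaleR_minus_left scaleR_minus_right scaleR_cancel_left)
    then show False
      using assms(6-9) by (simp add: blinfun.minus_right)
  qed
  define u where "u = (1 / norm (z t)) *\<^sub>R z t"
  have "u \<in> V"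
    unfolding u_def z_def using V by (intro csubspace_scaleR csubspace_add)
  moreover have "norm u = 1" "norm (S u) = m"
    using \<open>z t \<noteq> 0\<close> t(3) by (simp_all add: u_def f_def blinfun.scaleR_right)
  ultimately show ?thesis
    by blast
qed

primrec choice_history :: "('a set \<Rightarrow> nat \<Rightarrow> 'a) \<Rightarrow> nat \<Rightarrow> 'a list" where
  "choice_history g 0 = []"
| "choice_history g (Suc n) = choice_history g n @ [g (set (choice_history g n)) n]"

lemma sequence_choice_from_history:
  fixes P :: "nat \<Rightarrow> 'a set \<Rightarrow> 'a \<Rightarrow> bool"
  assumes "\<And>n A. finite A \<Longrightarrow> \<exists>x. P n A x"
  shows "\<exists>u. \<forall>n. P n (u ` {..<n}) (u n)"
proof -
  define g where "g A (n::nat) = (SOME x. P n A x)" for A n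
  define u where "u n = g (set (choice_history g n)) n" for n
  have history: "set (choice_history g n) = u ` {..<n}" for n
    by (induction n) (simp_all add: u_def lessThan_Suc)
  have u_eq: "u n = g (u ` {..<n}) n" for n
    by (simp only: u_def[of n] history)
  have "P n (u ` {..<n}) (g (u ` {..<n}) n)" for n
    unfolding g_def by (rule someI_ex) (rule assms, simp)
  then show ?thesis
    by (intro exI[of _ u]) (simp add: u_eq[symmetric])
qed

lemma cinner_image_representation:
  fixes S :: "'a::chilbert_space \<Rightarrow>\<^sub>L 'b::complex_inner"
  assumes "clinear (blinfun_apply S)"
  shows "\<exists>R. \<forall>x v. cinner (S x) (S v) = cinner (R x) v"
proof -
  have "\<exists>r. \<forall>v. cinner (S x) (S v) = cinner r v" for x
  proof (rule riesz_representation)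
    show "bounded_linear (\<lambda>v. cinner (S x) (S v))"
      by (rule bounded_linear_compose[OF bounded_linear_cinner_right blinfun.bounded_linear_right])
    show "cinner (S x) (S (c *\<^sub>C v)) = c * cinner (S x) (S v)" for c v
      using assms by (simp add: clinear_def cinner_scaleC_right)
  qed
  then show ?thesis
    by metis
qed

lemma orthonormal_sequence_with_image_norms:
  fixes S :: "'h::chilbert_space \<Rightarrow>\<^sub>L 'h" and \<mu> :: "nat \<Rightarrow> real"
  assumes clin: "clinear (blinfun_apply S)"
    and spread: "\<And>P. finite P \<Longrightarrow> \<exists>v w. v \<in> orthogonal_complement P \<and> w \<in> orthogonal_complement P
      \<and> norm v = 1 \<and> norm w = 1 \<and> norm (S v) \<le> a \<and> b \<le> norm (S w)"
    and \<mu>: "\<And>n. a < \<mu> n" "\<And>n. \<mu> n < b"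
  shows "\<exists>u. orthonormal (range u) \<and> (\<forall>x\<in>range u. \<forall>y\<in>range u. x \<noteq> y \<longrightarrow> cinner (S x) (S y) = 0)
    \<and> (\<forall>n. norm (S (u n)) = \<mu> n)"
proof -
  obtain R where R: "\<And>x v. cinner (S x) (S v) = cinner (R x) v"
    using cinner_image_representation[OF clin] by blast
  define Q where "Q n A x \<longleftrightarrow> x \<in> orthogonal_complement (A \<union> R ` A) \<and> norm x = 1 \<and> norm (S x) = \<mu> n"
    for n A x
  have "\<exists>x. Q n A x" if "finite A" for n A
  proof -
    have "finite (A \<union> R ` A)"
      using that by simp
    then obtain v w where vw: "v \<in> orthogonal_complement (A \<union> R ` A)"
      "w \<in> orthogonal_complement (A \<union> R ` A)" "norm v = 1" "norm w = 1" "norm (S v) \<le> a" "b \<le> norm (S w)"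
      using spread by blast
    show ?thesis
      using csubspace_unit_vector_with_image_norm[OF csubspace_orthogonal_complement vw \<mu>(1) \<mu>(2)]
      unfolding Q_def by blast
  qed
  then obtain u where "\<And>n. Q n (u ` {..<n}) (u n)"
    using sequence_choice_from_history[of Q] by blast
  then have u: "\<And>n. u n \<in> orthogonal_complement (u ` {..<n} \<union> R ` u ` {..<n})"
    "\<And>n. norm (u n) = 1" "\<And>n. norm (S (u n)) = \<mu> n"
    unfolding Q_def by auto
  have orth_less: "cinner (u m) (u n) = 0 \<and> cinner (S (u m)) (S (u n)) = 0" if "m < n" for m n
    using u(1)[of n] that by (auto simp: orthogonal_complement_def R)
  have orth: "cinner (u m) (u n) = 0 \<and> cinner (S (u m)) (S (u n)) = 0" if "m \<noteq> n" for m n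
  proof (cases "m < n")
    case False
    then have "n < m"
      using that by simp
    then show ?thesis
      using orth_less[of n m] cinner_eq_0_sym by blast
  qed (rule orth_less)
  then have "orthonormal (range u)"
    unfolding orthonormal_def using u(2) by (metis rangeE)
  moreover have "\<forall>x\<in>range u. \<forall>y\<in>range u. x \<noteq> y \<longrightarrow> cinner (S x) (S y) = 0"
    using orth by (metis rangeE)
  ultimately show ?thesis
    using u(3) by blast
qed

lemma not_AN_if_norm_spread:
  fixes S :: "'h::chilbert_space \<Rightarrow>\<^sub>L 'h"
  assumes clin: "clinear (blinfun_apply S)" and "a < b"
    and spread: "\<And>P. finite P \<Longrightarrow> \<exists>v w. v \<in> orthogonal_complement P \<and> w \<in> orthogonal_complement P
      \<and> norm v = 1 \<and> norm w = 1 \<and> norm (S v) \<le> a \<and> b \<le> norm (S w)"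
  shows "S \<notin> AN"
proof
  assume "S \<in> AN"
  define \<mu> where "\<mu> n = a + (b - a) * (1 - 1 / Suc (Suc n))" for n
  have \<mu>: "a < \<mu> n" "\<mu> n < b" for n
  proof -
    have "0 < (b - a) * (1 + real n)"
      using \<open>a < b\<close> by simp
    then show "a < \<mu> n" "\<mu> n < b"
      using \<open>a < b\<close> by (simp_all add: \<mu>_def field_simps)
  qed
  obtain u where U: "orthonormal (range u)"
    "\<forall>x\<in>range u. \<forall>y\<in>range u. x \<noteq> y \<longrightarrow> cinner (S x) (S y) = 0" "\<And>n. norm (S (u n)) = \<mu> n"
    using orthonormal_sequence_with_image_norms[of S a b \<mu>] clin spread \<mu> by blast
  have "0 \<le> a"
    using spread[of "{}"] norm_ge_zero order_trans by blast
  have "(\<lambda>n. (\<mu> n)\<^sup>2) \<longlonglongrightarrow> (a + (b - a) * (1 - 0))\<^sup>2"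
    unfolding \<mu>_def by (intro tendsto_intros LIMSEQ_Suc[OF LIMSEQ_Suc[OF lim_const_over_n]])
  then have "\<forall>\<^sub>F n in sequentially. b\<^sup>2 - e < (\<mu> n)\<^sup>2" if "e > 0" for e
    using that by (intro order_tendstoD(1)) auto
  then have "\<exists>n. b\<^sup>2 - e < (\<mu> n)\<^sup>2" if "e > 0" for e
    using that by (meson eventually_sequentially order_refl)
  moreover have "(\<mu> n)\<^sup>2 < b\<^sup>2" for n
    using \<mu>[of n] \<open>0 \<le> a\<close> by (intro power_strict_mono) auto
  ultimately have "\<not> norm_attaining_on (closure (complex_vector.span (range u))) S"
    using U by (intro not_norm_attaining_on_closure_span[OF clin U(1)]) auto
  moreover have "norm (u 0) = 1"
    using U(1) by (simp add: orthonormal_def)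
  then have "closure (complex_vector.span (range u)) \<noteq> {0}"
    using in_closure_span[of "u 0" "range u"] by force
  ultimately show False
    using \<open>S \<in> AN\<close> csubspace_closure_span by (auto simp: AN_def)
qed

lemma not_in_closure_AN_if_norm_spread:
  fixes T :: "'h::chilbert_space \<Rightarrow>\<^sub>L 'h"
  assumes "\<alpha> < \<beta>"
    and spread: "\<And>P. finite P \<Longrightarrow> \<exists>v w. v \<in> orthogonal_complement P \<and> w \<in> orthogonal_complement P
      \<and> v \<noteq> 0 \<and> w \<noteq> 0 \<and> norm (T v) \<le> \<alpha> * norm v \<and> \<beta> * norm w \<le> norm (T w)"
  shows "T \<notin> closure AN"
proof
  assume "T \<in> closure AN"
  define \<delta> where "\<delta> = (\<beta> - \<alpha>) / 3"
  have "\<delta> > 0"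
    using assms(1) by (simp add: \<delta>_def)
  then obtain S where S: "S \<in> AN" "dist S T < \<delta>"
    using \<open>T \<in> closure AN\<close> closure_approachable by blast
  have close: "norm (S x - T x) \<le> \<delta> * norm x" for x
    using norm_blinfun[of "S - T" x] S(2)
    by (simp add: dist_norm blinfun.diff_left mult_right_mono order_trans)
  have "S \<notin> AN"
  proof (rule not_AN_if_norm_spread)
    show "clinear (blinfun_apply S)"
      using S(1) by (simp add: AN_def BOps_def)
    show "\<alpha> + \<delta> < \<beta> - \<delta>"
      using assms(1) by (simp add: \<delta>_def field_simps)
    fix P :: "'h set"
    assume "finite P"
    then obtain v w where vw: "v \<in> orthogonal_complement P" "w \<in> orthogonal_complement P"
      "v \<noteq> 0" "w \<noteq> 0" "norm (T v) \<le> \<alpha> * norm v" "\<beta> * norm w \<le> norm (T w)"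
      using spread by blast
    define v' where "v' = (1 / norm v) *\<^sub>R v"
    define w' where "w' = (1 / norm w) *\<^sub>R w"
    have "v' \<in> orthogonal_complement P" "w' \<in> orthogonal_complement P" "norm v' = 1" "norm w' = 1"
      using vw by (auto simp: v'_def w'_def intro: csubspace_scaleR csubspace_orthogonal_complement)
    moreover have "norm (T v') \<le> \<alpha>" "\<beta> \<le> norm (T w')"
      using vw by (simp_all add: v'_def w'_def blinfun.scaleR_right field_simps)
    then have "norm (S v') \<le> \<alpha> + \<delta>" "\<beta> - \<delta> \<le> norm (S w')"
      using close[of v'] close[of w'] norm_triangle_ineq2[of "S v'" "T v'"]
        norm_triangle_ineq3[of "S w'" "T w'"] \<open>norm v' = 1\<close> \<open>norm w' = 1\<close>
      by (auto simp: norm_minus_commute)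
    ultimately show "\<exists>v w. v \<in> orthogonal_complement P \<and> w \<in> orthogonal_complement P
      \<and> norm v = 1 \<and> norm w = 1 \<and> norm (S v) \<le> \<alpha> + \<delta> \<and> \<beta> - \<delta> \<le> norm (S w)"
      by blast
  qed
  then show False
    using S(1) by simp
qed

section \<open>Compact operators\<close>

lemma compact_closure_if_finite_nets:
  fixes A :: "'a::{metric_space, complete_space} set"
  assumes "\<And>e. e > 0 \<Longrightarrow> \<exists>k. finite k \<and> A \<subseteq> (\<Union>x\<in>k. ball x e)"
  shows "compact (closure A)"
proof -
  have "\<exists>k. finite k \<and> closure A \<subseteq> (\<Union>x\<in>k. ball x e)" if "e > 0" for e
  proof -
    obtain k where k: "finite k" "A \<subseteq> (\<Union>x\<in>k. ball x (e/2))"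
      using assms[of "e/2"] \<open>e > 0\<close> by auto
    have "A \<subseteq> (\<Union>x\<in>k. cball x (e/2))"
      using k(2) ball_subset_cball by blast
    moreover have "closed (\<Union>x\<in>k. cball x (e/2))"
      using k(1) by (intro closed_UN) auto
    ultimately have "closure A \<subseteq> (\<Union>x\<in>k. cball x (e/2))"
      by (rule closure_minimal)
    also have "\<dots> \<subseteq> (\<Union>x\<in>k. ball x e)"
      using that by auto
    finally show ?thesis
      using k(1) by blast
  qed
  then show ?thesis
    unfolding compact_eq_totally_bounded by (simp add: complete_eq_closed)
qed

lemma norm_le_if_unit_ball_bound:
  assumes "bounded_linear f" "\<And>y. norm y \<le> 1 \<Longrightarrow> norm (f y) \<le> \<epsilon>"
  shows "norm (f y) \<le> \<epsilon> * norm y"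
proof (cases "y = 0")
  case True
  then show ?thesis
    using linear_simps(3)[OF assms(1)] by simp
next
  case False
  interpret f: bounded_linear f by fact
  have "f y = norm y *\<^sub>R f ((1 / norm y) *\<^sub>R y)"
    using False by (simp add: f.scaleR)
  also have "norm \<dots> \<le> norm y * \<epsilon>"
    using False assms(2)[of "(1 / norm y) *\<^sub>R y"] by (simp add: mult_left_mono)
  finally show ?thesis
    by (simp add: mult.commute)
qed

lemma norm_diff_proj_le_diff:
  assumes "finite E" "orthonormal E" "proj E x = x"
  shows "norm (z - proj E z) \<le> norm (z - x)"
proof -
  have orth: "cinner (z - proj E z) (proj E (z - x)) = 0"
    using cinner_proj_diff_proj[OF assms(1,2), of "z - x" z] cinner_eq_0_sym by blast
  have "(norm (z - x))\<^sup>2 = (norm ((z - proj E z) + proj E (z - x)))\<^sup>2"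
    using assms(3) by (simp add: proj_diff)
  also have "\<dots> = (norm (z - proj E z))\<^sup>2 + (norm (proj E (z - x)))\<^sup>2"
    by (rule pythagoras[OF orth])
  finally have "(norm (z - proj E z))\<^sup>2 \<le> (norm (z - x))\<^sup>2"
    by simp
  then show ?thesis
    by (rule power2_le_imp_le) simp
qed

lemma compact_op_if_small_on_orthogonal_complements:
  fixes C :: "'b::complex_inner \<Rightarrow>\<^sub>L 'a::{real_normed_vector, complete_space}"
  assumes small: "\<And>c. c > 0 \<Longrightarrow> \<exists>Q. finite Q \<and> (\<forall>y\<in>orthogonal_complement Q. norm (C y) \<le> c * norm y)"
  shows "compact_op C"
  unfolding compact_op_def
proof (rule compact_closure_if_finite_nets)
  fix e :: real
  assume "e > 0"
  then obtain Q where Q: "finite Q" "\<And>y. y \<in> orthogonal_complement Q \<Longrightarrow> norm (C y) \<le> e/2 * norm y"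
    using small[of "e/2"] by auto
  obtain E where E: "finite E" "orthonormal E" "\<forall>q\<in>Q. proj E q = q"
    using orthonormal_proj_fixing_exists[OF Q(1)] by blast
  have "compact (C ` span_polydisc E)"
    by (intro compact_continuous_image compact_span_polydisc E(1) continuous_intros)
  moreover have "e/2 > 0"
    using \<open>e > 0\<close> by simp
  ultimately obtain k where k: "finite k" "C ` span_polydisc E \<subseteq> (\<Union>x\<in>k. ball x (e/2))"
    unfolding compact_eq_totally_bounded by blast
  have cover: "C y \<in> (\<Union>x\<in>k. ball x e)" if y: "norm y \<le> 1" for y
  proof -
    have "C (proj E y) \<in> (\<Union>x\<in>k. ball x (e/2))"
      using subsetD[OF k(2) imageI[OF proj_in_span_polydisc[OF E(2) y]]] .
    then obtain x where x: "x \<in> k" "dist x (C (proj E y)) < e/2"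
      by auto
    have "cinner q (y - proj E y) = 0" if "q \<in> Q" for q
      using cinner_proj_diff_proj[OF E(1,2), of q y] E(3) that by simp
    then have "y - proj E y \<in> orthogonal_complement Q"
      by (simp add: orthogonal_complement_def)
    then have "norm (C y - C (proj E y)) \<le> e/2 * norm (y - proj E y)"
      using Q(2) by (metis blinfun.diff_right)
    also have "\<dots> \<le> e/2"
      using norm_diff_proj_le[OF E(1,2), of y] y \<open>e > 0\<close> by simp
    finally have "dist (C (proj E y)) (C y) \<le> e/2"
      by (simp add: dist_norm norm_minus_commute)
    then have "dist x (C y) < e"
      using x(2) dist_triangle[of x "C y" "C (proj E y)"] by linarith
    then show ?thesis
      using x(1) by auto
  qed
  show "\<exists>k. finite k \<and> C ` cball 0 1 \<subseteq> (\<Union>x\<in>k. ball x e)"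
    using k(1) cover by (intro exI[of _ k]) auto
qed

lemma compact_op_finite_rank_approx:
  fixes C :: "'b::real_normed_vector \<Rightarrow>\<^sub>L 'a::chilbert_space"
  assumes "compact_op C" "\<epsilon> > 0"
  shows "\<exists>E. finite E \<and> orthonormal E \<and> (\<forall>y. norm (C y - proj E (C y)) \<le> \<epsilon> * norm y)"
proof -
  obtain k where k: "finite k" "closure (C ` cball 0 1) \<subseteq> (\<Union>x\<in>k. ball x \<epsilon>)"
    using assms unfolding compact_op_def compact_eq_totally_bounded by blast
  obtain E where E: "finite E" "orthonormal E" "\<forall>x\<in>k. proj E x = x"
    using orthonormal_proj_fixing_exists[OF k(1)] by blast
  have unit_ball: "norm (C y - proj E (C y)) \<le> \<epsilon>" if y: "norm y \<le> 1" for y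
  proof -
    have "C y \<in> closure (C ` cball 0 1)"
      using y closure_subset by fastforce
    then have "C y \<in> (\<Union>x\<in>k. ball x \<epsilon>)"
      using k(2) by (rule subsetD[rotated])
    then obtain x where "x \<in> k" "dist x (C y) < \<epsilon>"
      by auto
    moreover have "norm (C y - proj E (C y)) \<le> norm (C y - x)"
      using norm_diff_proj_le_diff[OF E(1,2)] E(3) \<open>x \<in> k\<close> by blast
    ultimately show ?thesis
      by (simp add: dist_norm norm_minus_commute)
  qed
  have "bounded_linear (\<lambda>y. C y - proj E (C y))"
    by (intro bounded_linear_sub blinfun.bounded_linear_right
        bounded_linear_compose[OF bounded_linear_proj])
  then have "norm (C y - proj E (C y)) \<le> \<epsilon> * norm y" for y
    by (rule norm_le_if_unit_ball_bound[OF _ unit_ball])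
  then show ?thesis
    using E(1,2) by blast
qed

section \<open>The block operator\<close>

lemma bounded_linear_block:
  fixes C :: "'b::real_normed_vector \<Rightarrow>\<^sub>L 'a::real_normed_vector" and D :: "'a \<Rightarrow>\<^sub>L 'b"
  shows "bounded_linear (\<lambda>(x, y). (x + C y, D x + y))"
proof -
  have "bounded_linear (\<lambda>p::'a \<times> 'b. (fst p + C (snd p), D (fst p) + snd p))"
    by (intro bounded_linear_Pair bounded_linear_add bounded_linear_fst bounded_linear_snd
        bounded_linear_compose[OF blinfun.bounded_linear_right])
  then show ?thesis
    by (simp add: case_prod_unfold)
qed

lemma block_op_apply [simp]: "block_op C D (x, y) = (x + C y, D x + y)"
  unfolding block_op_def by (simp add: bounded_linear_Blinfun_apply[OF bounded_linear_block])

lemma norm_block_op_diff_le: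
  fixes C C' :: "'b::real_normed_vector \<Rightarrow>\<^sub>L 'a::real_normed_vector" and D D' :: "'a \<Rightarrow>\<^sub>L 'b"
  assumes "norm (C - C') \<le> \<epsilon>" "norm (D - D') \<le> \<epsilon>"
  shows "norm (block_op C D - block_op C' D') \<le> \<epsilon>"
proof (rule norm_blinfun_bound)
  show "0 \<le> \<epsilon>"
    using assms(1) norm_ge_zero order_trans by blast
  fix z :: "'a \<times> 'b"
  obtain x y where z: "z = (x, y)"
    by (cases z)
  have "(norm ((block_op C D - block_op C' D') z))\<^sup>2 = (norm ((C - C') y))\<^sup>2 + (norm ((D - D') x))\<^sup>2"
    by (simp add: z blinfun.diff_left norm_Pair_sq)
  also have "\<dots> \<le> (\<epsilon> * norm y)\<^sup>2 + (\<epsilon> * norm x)\<^sup>2"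
    using order_trans[OF norm_blinfun mult_right_mono[OF assms(1) norm_ge_zero], of y]
      order_trans[OF norm_blinfun mult_right_mono[OF assms(2) norm_ge_zero], of x]
    by (intro add_mono power_mono) simp_all
  also have "\<dots> = (\<epsilon> * norm z)\<^sup>2"
    by (simp add: z norm_Pair_sq power_mult_distrib algebra_simps)
  finally show "norm ((block_op C D - block_op C' D') z) \<le> \<epsilon> * norm z"
    by (rule power2_le_imp_le) (simp add: \<open>0 \<le> \<epsilon>\<close>)
qed

lemma norm_block_op_test_vectors:
  fixes C :: "'b::complex_inner \<Rightarrow>\<^sub>L 'a::complex_inner" and Cadj :: "'a \<Rightarrow>\<^sub>L 'b"
  assumes adj: "\<And>x y. cinner (C x) y = cinner x (Cadj y)"
  shows "(norm (block_op C Cadj (- C y, y)))\<^sup>2 = (norm y)\<^sup>2 + (norm (Cadj (C y)))\<^sup>2 - 2 * (norm (C y))\<^sup>2"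
    and "(norm (block_op C Cadj (C y, y)))\<^sup>2 = (norm y)\<^sup>2 + (norm (Cadj (C y)))\<^sup>2 + 6 * (norm (C y))\<^sup>2"
proof -
  have "cinner y (Cadj (C y)) = of_real ((norm (C y))\<^sup>2)"
    using adj[of y "C y"] by (simp add: cinner_self)
  then have re: "Re (cinner y (Cadj (C y))) = (norm (C y))\<^sup>2" "Re (cinner (Cadj (C y)) y) = (norm (C y))\<^sup>2"
    by (simp_all, metis Re_complex_of_real cinner_conj cnj.simps(1))
  have "block_op C Cadj (- C y, y) = (0, y - Cadj (C y))"
    by (simp add: blinfun.minus_right)
  then show "(norm (block_op C Cadj (- C y, y)))\<^sup>2 = (norm y)\<^sup>2 + (norm (Cadj (C y)))\<^sup>2 - 2 * (norm (C y))\<^sup>2"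
    using re by (simp add: norm_Pair_sq norm_diff_sq)
  show "(norm (block_op C Cadj (C y, y)))\<^sup>2 = (norm y)\<^sup>2 + (norm (Cadj (C y)))\<^sup>2 + 6 * (norm (C y))\<^sup>2"
    using re by (simp add: norm_Pair_sq norm_add_sq cinner_self)
qed

lemma block_op_norm_spread:
  fixes C :: "'b::complex_inner \<Rightarrow>\<^sub>L 'a::complex_inner" and Cadj :: "'a \<Rightarrow>\<^sub>L 'b"
  assumes adj: "\<And>x y. cinner (C x) y = cinner x (Cadj y)"
    and "norm C \<le> 1" "0 \<le> c" "c * norm y < norm (C y)"
  shows "(norm (block_op C Cadj (- C y, y)))\<^sup>2 \<le> (1 - c\<^sup>2) * (norm (- C y, y))\<^sup>2"
    and "(1 + 2 * c\<^sup>2) * (norm (C y, y))\<^sup>2 \<le> (norm (block_op C Cadj (C y, y)))\<^sup>2"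
proof -
  define g where "g = (norm (C y))\<^sup>2"
  define s where "s = (norm y)\<^sup>2"
  have C_le: "norm (C z) \<le> norm z" for z
    using norm_blinfun[of C z] mult_right_mono[OF assms(2) norm_ge_zero[of z]] by simp
  then have "norm (Cadj z) \<le> norm z" for z
    using adjoint_norm_bound[of C Cadj 1] adj by simp
  then have h: "(norm (Cadj (C y)))\<^sup>2 \<le> g"
    unfolding g_def by (intro power_mono) simp_all
  have "(c * norm y)\<^sup>2 < (norm (C y))\<^sup>2"
    using assms(3,4) by (intro power_strict_mono) auto
  then have cs: "c\<^sup>2 * s < g"
    by (simp add: g_def s_def power_mult_distrib)
  have "c * norm y < 1 * norm y"
    using assms(4) C_le[of y] by simp
  then have "c < 1"
    by (rule mult_right_less_imp_less) simp
  then have cg: "c\<^sup>2 * g \<le> g"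
    using assms(3) by (simp add: g_def mult_left_le_one_le power_le_one)
  have pair: "(norm (- C y, y))\<^sup>2 = g + s" "(norm (C y, y))\<^sup>2 = g + s"
    by (simp_all add: norm_Pair_sq g_def s_def)
  have g_nonneg: "0 \<le> g"
    by (simp add: g_def)
  note T = norm_block_op_test_vectors[OF adj, of y, folded g_def s_def]
  have "(1 - c\<^sup>2) * (g + s) = g + s - c\<^sup>2 * g - c\<^sup>2 * s"
    by (simp add: algebra_simps)
  then show "(norm (block_op C Cadj (- C y, y)))\<^sup>2 \<le> (1 - c\<^sup>2) * (norm (- C y, y))\<^sup>2"
    unfolding pair T(1) using h cs cg by linarith
  have "(1 + 2 * c\<^sup>2) * (g + s) = g + s + 2 * (c\<^sup>2 * g) + 2 * (c\<^sup>2 * s)"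
    by (simp add: algebra_simps)
  then show "(1 + 2 * c\<^sup>2) * (norm (C y, y))\<^sup>2 \<le> (norm (block_op C Cadj (C y, y)))\<^sup>2"
    unfolding pair T(2) using cs cg g_nonneg zero_le_power2[of "norm (Cadj (C y))"] by linarith
qed

lemma norm_le_sqrt_mult:
  assumes "(norm a)\<^sup>2 \<le> r * (norm b)\<^sup>2"
  shows "norm a \<le> sqrt r * norm b"
  using real_le_rsqrt[OF assms] by (simp add: real_sqrt_mult)

lemma sqrt_mult_le_norm:
  assumes "r * (norm b)\<^sup>2 \<le> (norm a)\<^sup>2"
  shows "sqrt r * norm b \<le> norm a"
  using real_le_lsqrt[OF norm_ge_zero assms] by (simp add: real_sqrt_mult)

lemma compact_op_if_block_op_in_closure_AN:
  fixes C :: "'b::chilbert_space \<Rightarrow>\<^sub>L 'a::chilbert_space" and Cadj :: "'a \<Rightarrow>\<^sub>L 'b"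
  assumes adj: "\<And>x y. cinner (C x) y = cinner x (Cadj y)" and "norm C \<le> 1"
    and "block_op C Cadj \<in> closure AN"
  shows "compact_op C"
proof (rule ccontr)
  assume "\<not> compact_op C"
  then obtain c where "c > 0"
    and large: "\<And>Q. finite Q \<Longrightarrow> \<exists>y\<in>orthogonal_complement Q. c * norm y < norm (C y)"
    using compact_op_if_small_on_orthogonal_complements[of C] by (meson not_le)
  have "block_op C Cadj \<notin> closure AN"
  proof (rule not_in_closure_AN_if_norm_spread)
    show "sqrt (1 - c\<^sup>2) < sqrt (1 + 2 * c\<^sup>2)"
      using \<open>c > 0\<close> by simp
    fix P :: "('a \<times> 'b) set"
    assume "finite P"
    then obtain y where y: "y \<in> orthogonal_complement (Cadj ` fst ` P \<union> snd ` P)"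
      "c * norm y < norm (C y)"
      using large[of "Cadj ` fst ` P \<union> snd ` P"] by blast
    have "cinner (fst p) (C y) = 0" "cinner (snd p) y = 0" if "p \<in> P" for p
    proof -
      have "cinner (Cadj (fst p)) y = 0" "cinner (snd p) y = 0"
        using y(1) that by (auto simp: orthogonal_complement_def)
      then show "cinner (fst p) (C y) = 0" "cinner (snd p) y = 0"
        using adj[of y "fst p"] cinner_eq_0_sym by metis+
    qed
    then have "(- C y, y) \<in> orthogonal_complement P" "(C y, y) \<in> orthogonal_complement P"
      by (auto simp: orthogonal_complement_def cinner_prod_def cinner_minus_right)
    moreover have "y \<noteq> 0"
      using y(2) by auto
    then have "(- C y, y) \<noteq> 0" "(C y, y) \<noteq> 0"
      by (simp_all add: zero_prod_def)
    moreover note block_op_norm_spread[OF adj assms(2) less_imp_le[OF \<open>c > 0\<close>] y(2)]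
    ultimately show "\<exists>v w. v \<in> orthogonal_complement P \<and> w \<in> orthogonal_complement P \<and> v \<noteq> 0 \<and> w \<noteq> 0
        \<and> norm (block_op C Cadj v) \<le> sqrt (1 - c\<^sup>2) * norm v
        \<and> sqrt (1 + 2 * c\<^sup>2) * norm w \<le> norm (block_op C Cadj w)"
      by (metis norm_le_sqrt_mult sqrt_mult_le_norm)
  qed
  then show False
    using assms(3) by blast
qed

lemma block_op_finite_rank_in_AN:
  fixes C :: "'b::chilbert_space \<Rightarrow>\<^sub>L 'a::chilbert_space" and Cadj :: "'a \<Rightarrow>\<^sub>L 'b"
  assumes clin: "clinear (blinfun_apply C)" and adj: "\<And>x y. cinner (C x) y = cinner x (Cadj y)"
    and E: "finite E" "orthonormal E"
  shows "block_op (Blinfun (proj E) o\<^sub>L C) (Cadj o\<^sub>L Blinfun (proj E)) \<in> AN"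
proof -
  define S where "S = block_op (Blinfun (proj E) o\<^sub>L C) (Cadj o\<^sub>L Blinfun (proj E))"
  have S_apply: "S (x, y) = (x + proj E (C y), Cadj (proj E x) + y)" for x y
    by (simp add: S_def bounded_linear_Blinfun_apply[OF bounded_linear_proj])
  have Cadj_clin: "clinear (blinfun_apply Cadj)"
    by (rule clinear_adjoint[OF adj clin])
  have "clinear (blinfun_apply S)"
    unfolding clinear_def
  proof (intro conjI allI)
    show "S (v + w) = S v + S w" for v w
      by (simp add: blinfun.add_right)
    show "S (c *\<^sub>C v) = c *\<^sub>C S v" for c v
      using clin Cadj_clin
      by (cases v) (simp add: clinear_def scaleC_prod_def S_apply proj_scaleC scaleC_add_right)
  qed
  define W where "W = (\<lambda>e. (e, 0)) ` E \<union> (\<lambda>e. (0, Cadj e)) ` E"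
  obtain F where F: "finite F" "orthonormal F" "\<forall>w\<in>W. proj F w = w"
    using orthonormal_proj_fixing_exists[of W] E(1) by (auto simp: W_def)
  have expand: "S v - v = (\<Sum>e\<in>E. cinner (0, Cadj e) v *\<^sub>C (e, 0) + cinner (e, 0) v *\<^sub>C (0, Cadj e))"
    for v
  proof (cases v)
    case (Pair x y)
    have "proj E (C y) = (\<Sum>e\<in>E. cinner (Cadj e) y *\<^sub>C e)"
      unfolding proj_def using adj by (metis cinner_conj)
    moreover have "Cadj (proj E x) = (\<Sum>e\<in>E. cinner e x *\<^sub>C Cadj e)"
      unfolding proj_def by (rule clinear_sum[OF Cadj_clin])
    ultimately show ?thesis
      by (simp add: Pair S_apply prod_eq_iff fst_sum snd_sum scaleC_prod_def cinner_prod_def)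
  qed
  have "cinner w (proj F v) = cinner w v" if "w \<in> W" for w v
    using F(3) that cinner_proj_left[of F w v] by simp
  then have "S (proj F v) - proj F v = S v - v" for v
    unfolding expand by (simp add: W_def)
  moreover have "proj F (S v - v) = S v - v" for v
    unfolding expand using F(3) by (simp add: W_def proj_sum proj_add proj_scaleC)
  ultimately have "S \<in> AN"
    by (intro AN_if_finite_rank_perturbation_of_identity[OF \<open>clinear (blinfun_apply S)\<close> F(1,2)])
  then show ?thesis
    by (simp add: S_def)
qed

lemma block_op_in_closure_AN_if_compact_op:
  fixes C :: "'b::chilbert_space \<Rightarrow>\<^sub>L 'a::chilbert_space" and Cadj :: "'a \<Rightarrow>\<^sub>L 'b"
  assumes clin: "clinear (blinfun_apply C)" and adj: "\<And>x y. cinner (C x) y = cinner x (Cadj y)"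
    and "compact_op C"
  shows "block_op C Cadj \<in> closure AN"
  unfolding closure_approachable
proof (intro allI impI)
  fix e :: real
  assume "e > 0"
  then obtain E where E: "finite E" "orthonormal E" "\<And>y. norm (C y - proj E (C y)) \<le> e/2 * norm y"
    using compact_op_finite_rank_approx[OF assms(3), of "e/2"] by auto
  define P where "P = Blinfun (proj E)"
  have P: "blinfun_apply P = proj E"
    by (simp add: P_def bounded_linear_Blinfun_apply[OF bounded_linear_proj])
  have "norm (C - (P o\<^sub>L C)) \<le> e/2"
    using E(3) \<open>e > 0\<close> by (intro norm_blinfun_bound) (simp_all add: P blinfun.diff_left)
  moreover have "norm (Cadj - (Cadj o\<^sub>L P)) \<le> e/2"
  proof (intro norm_blinfun_bound)
    have "cinner ((C - (P o\<^sub>L C)) y) x = cinner y ((Cadj - (Cadj o\<^sub>L P)) x)" for x y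
      by (simp add: P blinfun.diff_left cinner_diff_left cinner_diff_right adj cinner_proj_left)
    then show "norm ((Cadj - (Cadj o\<^sub>L P)) x) \<le> e/2 * norm x" for x
      using E(3) \<open>e > 0\<close> by (intro adjoint_norm_bound) (simp_all add: P blinfun.diff_left)
  qed (use \<open>e > 0\<close> in simp)
  ultimately have "norm (block_op C Cadj - block_op (P o\<^sub>L C) (Cadj o\<^sub>L P)) \<le> e/2"
    by (rule norm_block_op_diff_le)
  then have "dist (block_op (P o\<^sub>L C) (Cadj o\<^sub>L P)) (block_op C Cadj) < e"
    using \<open>e > 0\<close> by (simp add: dist_norm norm_minus_commute)
  then show "\<exists>S\<in>AN. dist S (block_op C Cadj) < e"
    using block_op_finite_rank_in_AN[OF clin adj E(1,2)] unfolding P_def by blast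
qed

theorem corollary5p4:
  fixes C :: "'b::chilbert_space \<Rightarrow>\<^sub>L 'a::chilbert_space"
    and Cadj :: "'a \<Rightarrow>\<^sub>L 'b"
  assumes "separable_infdim TYPE('a)" and "separable_infdim TYPE('b)"
    and "C \<in> BOps"
    and "norm C \<le> 1"
    and "\<forall>x y. cinner (C x) y = cinner x (Cadj y)"
  shows "block_op C Cadj \<in> closure (AN :: (('a \<times> 'b) \<Rightarrow>\<^sub>L ('a \<times> 'b)) set) \<longleftrightarrow> compact_op C"
proof
  assume "block_op C Cadj \<in> closure AN"
  then show "compact_op C"
    using compact_op_if_block_op_in_closure_AN assms(4,5) by blast
next
  assume "compact_op C"
  then show "block_op C Cadj \<in> closure AN"
    using assms(3,5) by (intro block_op_in_closure_AN_if_compact_op) (simp_all add: BOps_def)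
qed

end
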